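(* Let $\mathbf v\in\mathbb R_{>0}^m$, $\tau=\sum_iv_i^2k_i$, and let $\mathcal V\in\mathcal P_{\mathbf v}(m,\mathbf k,d)$ be irreducible. Then the following are equivalent: (1) $(\mathcal V,\mathcal V^\#)$ is a local $d_P$-minimizer of the joint potential on $\mathcal{DRS}_{\mathbf v}$; (2) $(\mathcal V,\mathcal V^\#)$ is a global minimizer of the joint potential on $\mathcal{DRS}_{\mathbf v}$; (3) $\mathcal V$ is tight, i.e. $S_{\mathcal V}=\frac{\tau}{d}I_d$.
   Context: Fix integers $m,d\ge1$ and $\mathbf k=(k_1,\dots,k_m)\in\mathbb N^m$ with each $k_i\le d$. A system is an $m$-tuple $\mathcal V=(V_i)_{i=1}^m$ with $V_i\in L(\mathbb C^d,\mathbb C^{k_i})$; its RS operator is $S_{\mathcal V}=\sum_iV_i^*V_i$, and $\mathcal V$ is a reconstruction system (RS) if $S_{\mathcal V}$ is invertible; $\mathcal{RS}(m,\mathbf k,d)$ is the set of RS's. Given weights $\mathbf v\in\mathbb R_{>0}^m$, $\mathcal P_{\mathbf v}(m,\mathbf k,d)$ is the set of RS's with $V_iV_i^*=v_i^2I_{k_i}$ for all $i$. $\mathcal V\in\mathcal P_{\mathbf v}$ is irreducible if the commutant $\{A\in M_d(\mathbb C):AV_i^*V_i=V_i^*V_iA\ \forall i\}$ equals $\mathbb CI_d$. The canonical dual is $\mathcal V^\#=(V_iS_{\mathcal V}^{-1})_i$; $\mathcal W\in\mathcal{RS}$ is a dual of $\mathcal V$ if $\sum_iW_i^*V_i=I_d$,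 and $\mathcal D(\mathcal V)$ is the set of duals. $\mathcal{DRS}_{\mathbf v}=\{(\mathcal V,\mathcal W)\in\mathcal P_{\mathbf v}\times\mathcal{RS}(m,\mathbf k,d):\mathcal W\in\mathcal D(\mathcal V)\}$, joint potential $\mathrm{FP}(\mathcal V,\mathcal W)=\operatorname{tr}S_{\mathcal V}^2+\operatorname{tr}S_{\mathcal W}^2$. The metric $d_P(\mathcal V,\mathcal W)=(\sum_i\|V_i-W_i\|_2^2)^{1/2}$ uses the Frobenius norm. A pair in $\mathcal{DRS}_{\mathbf v}$ is a local $d_P$-minimizer of FP if there is $\varepsilon>0$ with $\mathrm{FP}(\mathcal V',\mathcal W')\ge\mathrm{FP}(\mathcal V,\mathcal W)$ for all $(\mathcal V',\mathcal W')\in\mathcal{DRS}_{\mathbf v}$ with $d_P(\mathcal V,\mathcal V')+d_P(\mathcal W,\mathcal W')<\varepsilon$; a global minimizer minimizes FP over all of $\mathcal{DRS}_{\mathbf v}$. *)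

theory Defs
  imports "HOL-Analysis.Analysis" "Jordan_Normal_Form.Matrix"
begin

text \<open>Systems are represented as functions V :: nat => complex mat, of which only the
  entries V 0, ..., V (m-1) matter (0-based indexing of the m-tuple).\<close>

definition adj :: "complex mat \<Rightarrow> complex mat" where
  "adj A = transpose_mat (map_mat cnj A)"

definition mtrace :: "complex mat \<Rightarrow> complex" where
  "mtrace A = (\<Sum>i<dim_row A. A $$ (i, i))"

definition minv :: "complex mat \<Rightarrow> complex mat" where
  "minv A = (THE B. inverts_mat A B \<and> inverts_mat B A)"

definition frob :: "complex mat \<Rightarrow> real" where
  "frob A = sqrt (\<Sum>a<dim_row A. \<Sum>b<dim_col A. (cmod (A $$ (a, b)))\<^sup>2)"

definition is_system :: "nat \<Rightarrow> (nat \<Rightarrow> nat) \<Rightarrow> nat \<Rightarrow> (nat \<Rightarrow> complex mat) \<Rightarrow> bool" where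
  "is_system m k d V \<longleftrightarrow> (\<forall>i<m. V i \<in> carrier_mat (k i) d)"

definition RS_op :: "nat \<Rightarrow> nat \<Rightarrow> (nat \<Rightarrow> complex mat) \<Rightarrow> complex mat" where
  "RS_op m d V = mat d d (\<lambda>(a, b). \<Sum>i<m. (adj (V i) * V i) $$ (a, b))"

definition RS :: "nat \<Rightarrow> (nat \<Rightarrow> nat) \<Rightarrow> nat \<Rightarrow> (nat \<Rightarrow> complex mat) set" where
  "RS m k d = {V. is_system m k d V \<and> invertible_mat (RS_op m d V)}"

definition Pv :: "(nat \<Rightarrow> real) \<Rightarrow> nat \<Rightarrow> (nat \<Rightarrow> nat) \<Rightarrow> nat \<Rightarrow> (nat \<Rightarrow> complex mat) set" where
  "Pv v m k d = {V. V \<in> RS m k d \<and>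
      (\<forall>i<m. V i * adj (V i) = complex_of_real ((v i)\<^sup>2) \<cdot>\<^sub>m 1\<^sub>m (k i))}"

definition irreducible_sys :: "nat \<Rightarrow> nat \<Rightarrow> (nat \<Rightarrow> complex mat) \<Rightarrow> bool" where
  "irreducible_sys m d V \<longleftrightarrow>
     {A \<in> carrier_mat d d. \<forall>i<m. A * (adj (V i) * V i) = (adj (V i) * V i) * A}
       = {c \<cdot>\<^sub>m 1\<^sub>m d | c. True}"

definition can_dual :: "nat \<Rightarrow> nat \<Rightarrow> (nat \<Rightarrow> complex mat) \<Rightarrow> (nat \<Rightarrow> complex mat)" where
  "can_dual m d V = (\<lambda>i. V i * minv (RS_op m d V))"

definition cross_op :: "nat \<Rightarrow> nat \<Rightarrow> (nat \<Rightarrow> complex mat) \<Rightarrow> (nat \<Rightarrow> complex mat) \<Rightarrow> complex mat" where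
  "cross_op m d W V = mat d d (\<lambda>(a, b). \<Sum>i<m. (adj (W i) * V i) $$ (a, b))"

definition duals :: "nat \<Rightarrow> (nat \<Rightarrow> nat) \<Rightarrow> nat \<Rightarrow> (nat \<Rightarrow> complex mat) \<Rightarrow> (nat \<Rightarrow> complex mat) set" where
  "duals m k d V = {W. W \<in> RS m k d \<and> cross_op m d W V = 1\<^sub>m d}"

definition DRS :: "(nat \<Rightarrow> real) \<Rightarrow> nat \<Rightarrow> (nat \<Rightarrow> nat) \<Rightarrow> nat
    \<Rightarrow> ((nat \<Rightarrow> complex mat) \<times> (nat \<Rightarrow> complex mat)) set" where
  "DRS v m k d = {(V, W). V \<in> Pv v m k d \<and> W \<in> RS m k d \<and> W \<in> duals m k d V}"

text \<open>Joint frame potential tr S_V^2 + tr S_W^2; this trace is real (S_V, S_W Hermitian),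
  we take its real part to compare values in the real order.\<close>
definition FP :: "nat \<Rightarrow> nat \<Rightarrow> (nat \<Rightarrow> complex mat) \<Rightarrow> (nat \<Rightarrow> complex mat) \<Rightarrow> real" where
  "FP m d V W = Re (mtrace (RS_op m d V * RS_op m d V) + mtrace (RS_op m d W * RS_op m d W))"

definition dP :: "nat \<Rightarrow> (nat \<Rightarrow> complex mat) \<Rightarrow> (nat \<Rightarrow> complex mat) \<Rightarrow> real" where
  "dP m V W = sqrt (\<Sum>i<m. (frob (V i - W i))\<^sup>2)"

definition local_min_FP :: "(nat \<Rightarrow> real) \<Rightarrow> nat \<Rightarrow> (nat \<Rightarrow> nat) \<Rightarrow> nat
    \<Rightarrow> (nat \<Rightarrow> complex mat) \<Rightarrow> (nat \<Rightarrow> complex mat) \<Rightarrow> bool" where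
  "local_min_FP v m k d V W \<longleftrightarrow> (V, W) \<in> DRS v m k d \<and>
     (\<exists>\<epsilon>>0. \<forall>V' W'. (V', W') \<in> DRS v m k d \<and> dP m V V' + dP m W W' < \<epsilon>
        \<longrightarrow> FP m d V W \<le> FP m d V' W')"

definition global_min_FP :: "(nat \<Rightarrow> real) \<Rightarrow> nat \<Rightarrow> (nat \<Rightarrow> nat) \<Rightarrow> nat
    \<Rightarrow> (nat \<Rightarrow> complex mat) \<Rightarrow> (nat \<Rightarrow> complex mat) \<Rightarrow> bool" where
  "global_min_FP v m k d V W \<longleftrightarrow> (V, W) \<in> DRS v m k d \<and>
     (\<forall>V' W'. (V', W') \<in> DRS v m k d \<longrightarrow> FP m d V W \<le> FP m d V' W')"

end

theory Submission
  imports Defs "Jordan_Normal_Form.Determinant"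
begin

(* Tight => global.  Every weighted system has tr S_V = tau, every dual W of it has
   tr S_W >= d^2/tau (expand sum_i |W_i - (d/tau) V_i|^2 >= 0 using tr sum_i W_i^* V_i = d), and
   tr A^2 >= 2s tr A - s^2 d for Hermitian A.  Hence FP >= tau^2/d + d^3/tau^2 on all dual pairs,
   and a tight pair attains this value.

   Local => tight.  Put S = S_V and G = S - S^-3.  If G does not commute with some
   P_j = V_j^* V_j, then K = G P_j - P_j G is skew-Hermitian and nonzero; rotating V_j by the Cayley
   transform U(t) = (I + tK)(I - tK)^-1 keeps the weights, and the potential of the canonical dual
   pair has derivative 2 tr(G [P_j, 2K]) = -4 tr(K^*K) < 0 at t = 0, contradicting local
   minimality.  So G lies in the commutant and is a real scalar c by irreducibility.  Then
   S^4 = c S^3 + I; factoring x^4 - c x^3 - 1 at its positive root r and using that S is positive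
   semidefinite gives S = r I, and comparing traces r = tau/d. *)

section \<open>Conjugate transposes and traces\<close>

lemma adj_carrier[simp]: "A \<in> carrier_mat r c \<Longrightarrow> adj A \<in> carrier_mat c r"
  unfolding adj_def by auto

lemma adj_dims[simp]: "dim_row (adj A) = dim_col A" "dim_col (adj A) = dim_row A"
  unfolding adj_def by auto

lemma adj_index[simp]: "i < dim_col A \<Longrightarrow> j < dim_row A \<Longrightarrow> adj A $$ (i,j) = cnj (A $$ (j,i))"
  unfolding adj_def by auto

lemma adj_adj[simp]: "adj (adj A) = A"
  by (rule eq_matI) auto

lemma adj_one[simp]: "adj (1\<^sub>m n) = 1\<^sub>m n"
  by (intro eq_matI) auto

lemma adj_mult: assumes "A \<in> carrier_mat r n" "B \<in> carrier_mat n c"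
  shows "adj (A * B) = adj B * adj A"
  using assms by (intro eq_matI) (auto simp: scalar_prod_def sum_conjugate mult.commute)

lemma adj_add: assumes "A \<in> carrier_mat r c" "B \<in> carrier_mat r c"
  shows "adj (A + B) = adj A + adj B"
  using assms by (intro eq_matI) auto

lemma adj_minus: assumes "A \<in> carrier_mat r c" "B \<in> carrier_mat r c"
  shows "adj (A - B) = adj A - adj B"
  using assms by (intro eq_matI) auto

lemma adj_smult: "adj (a \<cdot>\<^sub>m A) = cnj a \<cdot>\<^sub>m adj A"
  by (intro eq_matI) auto

lemma mult_assoc4:
  assumes "A \<in> carrier_mat a b" "B \<in> carrier_mat b e" "C \<in> carrier_mat e f"
    "(D::'x::comm_ring_1 mat) \<in> carrier_mat f g"
  shows "A * (B * C) * D = A * B * (C * D)"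
proof -
  have "A * (B * C) * D = A * ((B * C) * D)" using assms by (meson assoc_mult_mat mult_carrier_mat)
  also have "\<dots> = A * (B * (C * D))" using assms by simp
  also have "\<dots> = A * B * (C * D)"
    using assoc_mult_mat[OF assms(1,2) mult_carrier_mat[OF assms(3,4)]] by simp
  finally show ?thesis .
qed

lemma smult_smult_mat: "a \<cdot>\<^sub>m (b \<cdot>\<^sub>m A) = (a * b) \<cdot>\<^sub>m (A :: complex mat)"
  by (intro eq_matI) auto

lemma smult_one_mult_smult_one: "(a \<cdot>\<^sub>m 1\<^sub>m n) * (b \<cdot>\<^sub>m 1\<^sub>m n) = ((a * b)::complex) \<cdot>\<^sub>m 1\<^sub>m n"
proof -
  have "(a \<cdot>\<^sub>m 1\<^sub>m n) * (b \<cdot>\<^sub>m 1\<^sub>m n) = a \<cdot>\<^sub>m (1\<^sub>m n * (b \<cdot>\<^sub>m 1\<^sub>m n))"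
    by (rule mult_smult_assoc_mat) auto
  also have "\<dots> = a \<cdot>\<^sub>m (b \<cdot>\<^sub>m 1\<^sub>m n)" by simp
  finally show ?thesis by (simp add: smult_smult_mat)
qed

definition mat_sum :: "nat \<Rightarrow> (nat \<Rightarrow> complex mat) \<Rightarrow> nat \<Rightarrow> complex mat" where
  "mat_sum d A m = mat d d (\<lambda>(a,b). \<Sum>i<m. A i $$ (a,b))"

lemma RS_op_mat_sum: "RS_op m d V = mat_sum d (\<lambda>i. adj (V i) * V i) m"
  unfolding RS_op_def mat_sum_def by simp

lemma cross_op_mat_sum: "cross_op m d W V = mat_sum d (\<lambda>i. adj (W i) * V i) m"
  unfolding cross_op_def mat_sum_def by simp

lemma mat_sum_cong: "(\<And>i. i < m \<Longrightarrow> A i = B i) \<Longrightarrow> mat_sum d A m = mat_sum d B m"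
  unfolding mat_sum_def by (intro eq_matI) auto

lemma mat_sum_0: "mat_sum d A 0 = 0\<^sub>m d d"
  unfolding mat_sum_def by (intro eq_matI) auto

lemma mat_sum_Suc: "A m \<in> carrier_mat d d \<Longrightarrow> mat_sum d A (Suc m) = mat_sum d A m + A m"
  unfolding mat_sum_def by (intro eq_matI) auto

lemma mat_sum_mult: assumes "B \<in> carrier_mat d d" "C \<in> carrier_mat d d"
  "\<And>i. i < m \<Longrightarrow> A i \<in> carrier_mat d d"
  shows "B * mat_sum d A m * C = mat_sum d (\<lambda>i. B * A i * C) m"
  using assms(3)
proof (induction m)
  case 0
  then show ?case using assms by (simp add: mat_sum_0)
next
  case (Suc m)
  have Am: "A m \<in> carrier_mat d d" using Suc by auto
  have "B * mat_sum d A (Suc m) * C = B * (mat_sum d A m + A m) * C" using Am by (simp add: mat_sum_Suc)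
  also have "\<dots> = (B * mat_sum d A m + B * A m) * C"
    using assms Am by (subst mult_add_distrib_mat[of B d d]) (auto simp: mat_sum_def)
  also have "\<dots> = B * mat_sum d A m * C + B * A m * C"
    using assms Am by (subst add_mult_distrib_mat[of _ d d]) (auto simp: mat_sum_def)
  also have "\<dots> = mat_sum d (\<lambda>i. B * A i * C) m + B * A m * C" using Suc by simp
  also have "\<dots> = mat_sum d (\<lambda>i. B * A i * C) (Suc m)"
    using assms Am by (subst mat_sum_Suc) auto
  finally show ?case .
qed

lemma adj_mat_sum: assumes "\<And>i. i < m \<Longrightarrow> A i \<in> carrier_mat d d"
  shows "adj (mat_sum d A m) = mat_sum d (\<lambda>i. adj (A i)) m"
proof (intro eq_matI)
  fix a b assume ab: "a < dim_row (mat_sum d (\<lambda>i. adj (A i)) m)" "b < dim_col (mat_sum d (\<lambda>i. adj (A i)) m)"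
  have "\<And>i. i \<in> {..<m} \<Longrightarrow> cnj (A i $$ (b, a)) = adj (A i) $$ (a, b)"
    using assms ab by (subst adj_index) (auto simp: mat_sum_def)
  thus "adj (mat_sum d A m) $$ (a, b) = mat_sum d (\<lambda>i. adj (A i)) m $$ (a, b)"
    using ab unfolding mat_sum_def by (auto simp: sum_conjugate)
qed (auto simp: mat_sum_def)

lemma mtrace_mat_sum: "(\<And>i. i < m \<Longrightarrow> A i \<in> carrier_mat d d) \<Longrightarrow>
    mtrace (mat_sum d A m) = (\<Sum>i<m. mtrace (A i))"
  unfolding mtrace_def mat_sum_def by (simp add: sum.swap[of _ "{..<m}"]) (intro sum.cong, auto)

lemma mtrace_add: "A \<in> carrier_mat n n \<Longrightarrow> B \<in> carrier_mat n n \<Longrightarrow> mtrace (A + B) = mtrace A + mtrace B"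
  unfolding mtrace_def by (simp add: sum.distrib)

lemma mtrace_minus: "A \<in> carrier_mat n n \<Longrightarrow> B \<in> carrier_mat n n \<Longrightarrow> mtrace (A - B) = mtrace A - mtrace B"
  unfolding mtrace_def by (simp add: sum_subtractf)

lemma mtrace_uminus: "A \<in> carrier_mat n n \<Longrightarrow> mtrace (- A) = - mtrace A"
  unfolding mtrace_def by (simp add: sum_negf)

lemma mtrace_smult: "A \<in> carrier_mat n n \<Longrightarrow> mtrace (c \<cdot>\<^sub>m A) = c * mtrace A"
  unfolding mtrace_def by (simp add: sum_distrib_left)

lemma mtrace_one: "mtrace (1\<^sub>m n) = of_nat n"
  unfolding mtrace_def by simp

lemma mtrace_comm: assumes "A \<in> carrier_mat n k" "B \<in> carrier_mat k n"
  shows "mtrace (A * B) = mtrace (B * A)"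
  using assms unfolding mtrace_def
  by (simp add: scalar_prod_def sum.swap[of _ "{..<n}"] mult.commute atLeast0LessThan)

lemma mtrace_adj_mult: assumes "A \<in> carrier_mat r c" "B \<in> carrier_mat r c"
  shows "mtrace (adj A * B) = (\<Sum>b<c. \<Sum>a<r. cnj (A $$ (a,b)) * B $$ (a,b))"
  using assms unfolding mtrace_def by (simp add: scalar_prod_def atLeast0LessThan)

lemma mtrace_adj_self: assumes "A \<in> carrier_mat r c"
  shows "mtrace (adj A * A) = complex_of_real (\<Sum>b<c. \<Sum>a<r. (cmod (A $$ (a,b)))\<^sup>2)"
proof -
  have "cnj z * z = complex_of_real ((cmod z)\<^sup>2)" for z
    by (subst complex_norm_square) (simp add: mult.commute)
  then show ?thesis using assms by (simp only: mtrace_adj_mult of_real_sum)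
qed

lemma mtrace_adj_self_nonneg: "A \<in> carrier_mat r c \<Longrightarrow> Re (mtrace (adj A * A)) \<ge> 0"
  by (simp add: mtrace_adj_self sum_nonneg)

lemma mtrace_adj_self_le_0: assumes A: "A \<in> carrier_mat r c" and le: "Re (mtrace (adj A * A)) \<le> 0"
  shows "A = 0\<^sub>m r c"
proof -
  have "(\<Sum>b<c. \<Sum>a<r. (cmod (A $$ (a,b)))\<^sup>2) = 0"
    using le mtrace_adj_self_nonneg[OF A] unfolding mtrace_adj_self[OF A] by simp
  hence "\<forall>b<c. (\<Sum>a<r. (cmod (A $$ (a,b)))\<^sup>2) = 0"
    by (subst (asm) sum_nonneg_eq_0_iff) (auto intro: sum_nonneg)
  hence "\<forall>b<c. \<forall>a<r. (cmod (A $$ (a,b)))\<^sup>2 = 0"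
    by (auto simp: sum_nonneg_eq_0_iff)
  thus ?thesis using A by (intro eq_matI) auto
qed

lemma mtrace_adj_self_pos: "A \<in> carrier_mat r c \<Longrightarrow> A \<noteq> 0\<^sub>m r c \<Longrightarrow> Re (mtrace (adj A * A)) > 0"
  using mtrace_adj_self_le_0 by force

(* For Hermitian A and any real s: tr A^2 >= 2 s tr A - s^2 n, from (Re a_bb - s)^2 >= 0. *)
lemma herm_trace_square_lower_bound: assumes A: "A \<in> carrier_mat n n" and h: "adj A = A"
  shows "Re (mtrace (A * A)) \<ge> 2 * s * Re (mtrace A) - s\<^sup>2 * real n"
proof -
  have "Re (mtrace (A * A)) = (\<Sum>b<n. \<Sum>a<n. (cmod (A $$ (a,b)))\<^sup>2)"
    using mtrace_adj_self[OF A] h by simp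
  also have "\<dots> \<ge> (\<Sum>b<n. (cmod (A $$ (b,b)))\<^sup>2)"
    by (intro sum_mono member_le_sum) auto
  also have "(\<Sum>b<n. (cmod (A $$ (b,b)))\<^sup>2) \<ge> (\<Sum>b<n. 2 * s * Re (A $$ (b,b)) - s\<^sup>2)"
  proof (intro sum_mono)
    fix b
    have "\<bar>Re (A $$ (b,b))\<bar> \<le> cmod (A $$ (b,b))" by (rule abs_Re_le_cmod)
    hence "(Re (A $$ (b,b)))\<^sup>2 \<le> (cmod (A $$ (b,b)))\<^sup>2"
      by (metis abs_ge_zero power2_abs power_mono)
    moreover have "0 \<le> (Re (A $$ (b,b)) - s)\<^sup>2" by simp
    ultimately show "2 * s * Re (A $$ (b,b)) - s\<^sup>2 \<le> (cmod (A $$ (b,b)))\<^sup>2"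
      by (simp add: power2_diff algebra_simps)
  qed
  also have "(\<Sum>b<n. 2 * s * Re (A $$ (b,b)) - s\<^sup>2) = 2 * s * Re (mtrace A) - s\<^sup>2 * real n"
    using A unfolding mtrace_def by (simp add: sum_subtractf sum_distrib_left)
  finally show ?thesis by simp
qed

section \<open>Inverses via the adjugate\<close>

(* The inverse minv is a definite description; this explicit formula (adjugate over
   determinant) makes it amenable to calculus. *)
definition inv_cof :: "complex mat \<Rightarrow> complex mat" where
  "inv_cof A = (1 / Determinant.det A) \<cdot>\<^sub>m adj_mat A"

lemma minv_unique: assumes A: "A \<in> carrier_mat n n" and B: "B \<in> carrier_mat n n"
  and AB: "A * B = 1\<^sub>m n"
  shows "minv A = B"
  unfolding minv_def
proof (rule the_equality)
  have BA: "B * A = 1\<^sub>m n" using mat_mult_left_right_inverse[OF A B AB] .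
  show "inverts_mat A B \<and> inverts_mat B A" using A B AB BA unfolding inverts_mat_def by auto
next
  fix B' assume "inverts_mat A B' \<and> inverts_mat B' A"
  hence 1: "A * B' = 1\<^sub>m n" "B' * A = 1\<^sub>m (dim_row B')" using A unfolding inverts_mat_def by auto
  have B': "B' \<in> carrier_mat n n"
    using arg_cong[OF 1(1), of dim_col] arg_cong[OF 1(2), of dim_col] A by auto
  have "B' = B' * (A * B)" using AB B' by simp
  also have "\<dots> = (B' * A) * B" using A B B' by simp
  also have "\<dots> = B" using 1(2) B' B by simp
  finally show "B' = B" .
qed

lemma smult_one_mat[simp]: "(1::complex) \<cdot>\<^sub>m A = A"
  by (intro eq_matI) auto

lemma inv_cof_carrier[simp]: assumes "A \<in> carrier_mat n n" shows "inv_cof A \<in> carrier_mat n n"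
  unfolding inv_cof_def using adj_mat(1)[OF assms] by simp

lemma inv_cof: assumes A: "A \<in> carrier_mat n n" and d: "Determinant.det A \<noteq> 0"
  shows "A * inv_cof A = 1\<^sub>m n" "inv_cof A * A = 1\<^sub>m n" "minv A = inv_cof A"
proof -
  show 1: "A * inv_cof A = 1\<^sub>m n" unfolding inv_cof_def
    using adj_mat[OF A] A d by (simp add: mult_smult_distrib[of _ n n _ n] smult_smult_mat)
  show "inv_cof A * A = 1\<^sub>m n"
    using mat_mult_left_right_inverse[OF A inv_cof_carrier[OF A] 1] .
  show "minv A = inv_cof A" using minv_unique[OF A inv_cof_carrier[OF A] 1] .
qed

lemma invertible_det: assumes A: "(A::complex mat) \<in> carrier_mat n n" and "invertible_mat A"
  shows "Determinant.det A \<noteq> 0"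
proof -
  obtain B where "inverts_mat A B" "inverts_mat B A" using assms unfolding invertible_mat_def by auto
  hence 1: "A * B = 1\<^sub>m n" "B * A = 1\<^sub>m (dim_row B)" using A unfolding inverts_mat_def by auto
  have B: "B \<in> carrier_mat n n"
    using arg_cong[OF 1(1), of dim_col] arg_cong[OF 1(2), of dim_col] A by auto
  have "Determinant.det A * Determinant.det B = 1" using det_mult[OF A B] 1(1) by simp
  thus ?thesis by auto
qed

lemma det_invertible: assumes A: "(A::complex mat) \<in> carrier_mat n n" and d: "Determinant.det A \<noteq> 0"
  shows "invertible_mat A"
proof -
  have "dim_row (inv_cof A) = n" using inv_cof_carrier[OF A] by auto
  then show ?thesis using inv_cof[OF A d] A unfolding invertible_mat_def inverts_mat_def
    by (intro conjI exI[of _ "inv_cof A"]) auto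
qed

lemma inv_cof_one[simp]: "inv_cof (1\<^sub>m n) = 1\<^sub>m n"
proof -
  have "1\<^sub>m n * inv_cof (1\<^sub>m n) = 1\<^sub>m n" using inv_cof(1)[of "1\<^sub>m n" n] by simp
  moreover have "inv_cof (1\<^sub>m n) \<in> carrier_mat n n" by simp
  ultimately show ?thesis by (metis left_mult_one_mat)
qed

lemma adj_inv_cof: assumes A: "A \<in> carrier_mat n n" and d: "Determinant.det A \<noteq> 0"
  shows "adj (inv_cof A) = inv_cof (adj A)" "Determinant.det (adj A) \<noteq> 0"
proof -
  have Tc: "inv_cof A \<in> carrier_mat n n" using A by simp
  have "adj (inv_cof A) * adj A = 1\<^sub>m n" using inv_cof(1)[OF A d] adj_mult[OF A Tc] by simp
  hence 2: "adj A * adj (inv_cof A) = 1\<^sub>m n"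
    using mat_mult_left_right_inverse[of "adj (inv_cof A)" n "adj A"] A Tc by auto
  show "Determinant.det (adj A) \<noteq> 0" using det_mult[of "adj A" n "adj (inv_cof A)"] 2 A Tc by auto
  from minv_unique[of "adj A" n, OF _ _ 2] inv_cof(3)[of "adj A" n, OF _ this] A Tc
  show "adj (inv_cof A) = inv_cof (adj A)" by auto
qed

lemma inv_cof_herm: "A \<in> carrier_mat n n \<Longrightarrow> Determinant.det A \<noteq> 0 \<Longrightarrow> adj A = A \<Longrightarrow>
    adj (inv_cof A) = inv_cof A"
  using adj_inv_cof(1) by metis

section \<open>Reconstruction operators and canonical duals\<close>

lemma RS_op_carrier[simp]: "RS_op m d V \<in> carrier_mat d d"
  unfolding RS_op_def by simp

lemma system_frame_carrier:
  "is_system m k d V \<Longrightarrow> i < m \<Longrightarrow> adj (V i) * V i \<in> carrier_mat d d"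
  unfolding is_system_def using adj_carrier mult_carrier_mat by blast

lemma RS_op_herm: assumes "is_system m k d V" shows "adj (RS_op m d V) = RS_op m d V"
proof -
  have "adj (RS_op m d V) = mat_sum d (\<lambda>i. adj (adj (V i) * V i)) m"
    unfolding RS_op_mat_sum by (rule adj_mat_sum) (rule system_frame_carrier[OF assms])
  also have "\<dots> = RS_op m d V" unfolding RS_op_mat_sum using assms unfolding is_system_def
    by (intro mat_sum_cong) (metis adj_adj adj_carrier adj_mult)
  finally show ?thesis .
qed

lemma RS_op_mult: assumes sys: "is_system m k d V" and M: "M \<in> carrier_mat d d"
  shows "RS_op m d (\<lambda>i. V i * M) = adj M * RS_op m d V * M"
proof -
  have "adj M * RS_op m d V * M = mat_sum d (\<lambda>i. adj M * (adj (V i) * V i) * M) m"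
    unfolding RS_op_mat_sum using M system_frame_carrier[OF sys] by (intro mat_sum_mult) auto
  also have "\<dots> = RS_op m d (\<lambda>i. V i * M)" unfolding RS_op_mat_sum
  proof (intro mat_sum_cong)
    fix i assume "i < m"
    hence Vi: "V i \<in> carrier_mat (k i) d" using sys unfolding is_system_def by auto
    show "adj M * (adj (V i) * V i) * M = adj (V i * M) * (V i * M)"
      unfolding adj_mult[OF Vi M] using mult_assoc4[OF adj_carrier[OF M] adj_carrier[OF Vi] Vi M] .
  qed
  finally show ?thesis by simp
qed

(* S_V is positive semidefinite: tr(B^* S_V B) = sum_i |V_i B|^2. *)
lemma RS_op_psd: assumes sys: "is_system m k d V" and B: "B \<in> carrier_mat d d"
  shows "Re (mtrace (adj B * RS_op m d V * B)) \<ge> 0"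
proof -
  have Vc: "\<And>i. i < m \<Longrightarrow> V i * B \<in> carrier_mat (k i) d" using sys B unfolding is_system_def by auto
  have "mtrace (adj B * RS_op m d V * B) = mtrace (RS_op m d (\<lambda>i. V i * B))"
    using RS_op_mult[OF sys B] by simp
  also have "\<dots> = (\<Sum>i<m. mtrace (adj (V i * B) * (V i * B)))"
    unfolding RS_op_mat_sum using Vc by (intro mtrace_mat_sum) (metis adj_carrier mult_carrier_mat)
  finally show ?thesis unfolding Re_sum by (auto intro!: sum_nonneg mtrace_adj_self_nonneg Vc)
qed

lemma cross_op_mult: assumes sys: "is_system m k d V" and M: "M \<in> carrier_mat d d"
  shows "cross_op m d (\<lambda>i. V i * M) V = adj M * RS_op m d V"
proof -
  have "adj M * RS_op m d V * 1\<^sub>m d = mat_sum d (\<lambda>i. adj M * (adj (V i) * V i) * 1\<^sub>m d) m"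
    unfolding RS_op_mat_sum using M system_frame_carrier[OF sys] by (intro mat_sum_mult) auto
  also have "\<dots> = cross_op m d (\<lambda>i. V i * M) V" unfolding cross_op_mat_sum
  proof (intro mat_sum_cong)
    fix i assume "i < m"
    hence Vi: "V i \<in> carrier_mat (k i) d" using sys unfolding is_system_def by auto
    show "adj M * (adj (V i) * V i) * 1\<^sub>m d = adj (V i * M) * V i"
      unfolding adj_mult[OF Vi M] using Vi M by (simp add: assoc_mult_mat[of _ d d _ "k i"])
  qed
  finally show ?thesis using M by (metis RS_op_carrier adj_carrier mult_carrier_mat right_mult_one_mat)
qed

lemma RS_op_upd: assumes sys: "is_system m k d V" and j: "j < m" and W: "W \<in> carrier_mat (k j) d"
  shows "RS_op m d (V(j := W)) = (RS_op m d V - adj (V j) * V j) + adj W * W"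
proof (rule eq_matI)
  have Vj: "V j \<in> carrier_mat (k j) d" using sys j unfolding is_system_def by auto
  fix a b assume "a < dim_row ((RS_op m d V - adj (V j) * V j) + adj W * W)"
    "b < dim_col ((RS_op m d V - adj (V j) * V j) + adj W * W)"
  hence ab: "a < d" "b < d" using W by auto
  define F where "F i = (adj (V i) * V i) $$ (a,b)" for i
  define F' where "F' i = (adj ((V(j := W)) i) * (V(j := W)) i) $$ (a,b)" for i
  have "RS_op m d (V(j := W)) $$ (a,b) = (\<Sum>i<m. F' i)" unfolding RS_op_def F'_def using ab by simp
  also have "\<dots> = F' j + (\<Sum>i\<in>{..<m} - {j}. F' i)" using j by (subst sum.remove[of _ j]) auto
  also have "(\<Sum>i\<in>{..<m} - {j}. F' i) = (\<Sum>i\<in>{..<m} - {j}. F i)" unfolding F_def F'_def by (intro sum.cong) auto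
  also have "\<dots> = (\<Sum>i<m. F i) - F j" using j by (subst sum.remove[of _ j]) auto
  finally have "RS_op m d (V(j := W)) $$ (a,b) = F' j + ((\<Sum>i<m. F i) - F j)" .
  moreover have "(\<Sum>i<m. F i) = RS_op m d V $$ (a,b)" unfolding RS_op_def F_def using ab by simp
  ultimately show "RS_op m d (V(j := W)) $$ (a,b) = ((RS_op m d V - adj (V j) * V j) + adj W * W) $$ (a,b)"
    unfolding F_def F'_def using ab Vj W by simp
qed (use assms in \<open>auto simp: is_system_def RS_op_def\<close>)

lemma Pv_system: "V \<in> Pv v m k d \<Longrightarrow> is_system m k d V"
  unfolding Pv_def RS_def by auto

lemma Pv_det: "V \<in> Pv v m k d \<Longrightarrow> Determinant.det (RS_op m d V) \<noteq> 0"
  unfolding Pv_def RS_def using invertible_det[OF RS_op_carrier] by auto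

lemma can_dual_eq: "Determinant.det (RS_op m d V) \<noteq> 0 \<Longrightarrow>
    can_dual m d V = (\<lambda>i. V i * inv_cof (RS_op m d V))"
  unfolding can_dual_def using inv_cof(3)[OF RS_op_carrier] by simp

lemma RS_op_inv_herm: "V \<in> Pv v m k d \<Longrightarrow> adj (inv_cof (RS_op m d V)) = inv_cof (RS_op m d V)"
  using inv_cof_herm[OF RS_op_carrier Pv_det RS_op_herm[OF Pv_system]] .

lemma RS_op_can_dual: assumes V: "V \<in> Pv v m k d"
  shows "RS_op m d (can_dual m d V) = inv_cof (RS_op m d V)"
proof -
  let ?S = "RS_op m d V"
  have Tc: "inv_cof ?S \<in> carrier_mat d d" by simp
  have "RS_op m d (can_dual m d V) = inv_cof ?S * (?S * inv_cof ?S)"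
    unfolding can_dual_eq[OF Pv_det[OF V]] RS_op_mult[OF Pv_system[OF V] Tc] RS_op_inv_herm[OF V]
    using Tc by (simp add: assoc_mult_mat[of _ d d _ d _ d])
  thus ?thesis using inv_cof(1)[OF RS_op_carrier Pv_det[OF V]] Tc by simp
qed

(* V# is a reconstruction system and a dual of V: sum_i (V_i S^-1)^* V_i = S^-1 S = I. *)
lemma can_dual_DRS: assumes V: "V \<in> Pv v m k d"
  shows "(V, can_dual m d V) \<in> DRS v m k d"
proof -
  let ?S = "RS_op m d V"
  note cd = can_dual_eq[OF Pv_det[OF V]]
  have Tc: "inv_cof ?S \<in> carrier_mat d d" by simp
  have C: "cross_op m d (can_dual m d V) V = 1\<^sub>m d"
    unfolding cd cross_op_mult[OF Pv_system[OF V] Tc] RS_op_inv_herm[OF V]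
    using inv_cof(2)[OF RS_op_carrier Pv_det[OF V]] .
  have "Determinant.det (inv_cof ?S) \<noteq> 0"
    using det_mult[OF RS_op_carrier[of m d V] Tc] inv_cof(1)[OF RS_op_carrier Pv_det[OF V]] by auto
  hence "invertible_mat (RS_op m d (can_dual m d V))"
    unfolding RS_op_can_dual[OF V] using det_invertible[OF Tc] by auto
  moreover have "is_system m k d (can_dual m d V)"
    unfolding cd using Pv_system[OF V] Tc unfolding is_system_def by auto
  ultimately show ?thesis using V C unfolding DRS_def duals_def RS_def by auto
qed

lemma FP_can_dual: "V \<in> Pv v m k d \<Longrightarrow> FP m d V (can_dual m d V) =
    Re (mtrace (RS_op m d V * RS_op m d V)) + Re (mtrace (inv_cof (RS_op m d V) * inv_cof (RS_op m d V)))"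
  unfolding FP_def by (simp add: RS_op_can_dual)

section \<open>Tight systems are global minimisers\<close>

lemma trace_RS_op: assumes "is_system m k d W"
  shows "mtrace (RS_op m d W) = complex_of_real (\<Sum>i<m. \<Sum>b<d. \<Sum>a<k i. (cmod (W i $$ (a,b)))\<^sup>2)"
proof -
  have c: "\<And>i. i < m \<Longrightarrow> W i \<in> carrier_mat (k i) d" using assms unfolding is_system_def by auto
  have "mtrace (RS_op m d W) = (\<Sum>i<m. mtrace (adj (W i) * W i))"
    unfolding RS_op_mat_sum by (rule mtrace_mat_sum) (metis c adj_carrier mult_carrier_mat)
  thus ?thesis by (simp add: of_real_sum mtrace_adj_self[OF c])
qed

(* The weights fix the trace: tr S_V = tr sum_i V_i V_i^* = sum_i v_i^2 k_i. *)
lemma trace_RS_op_Pv: assumes "V \<in> Pv v m k d"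
  shows "mtrace (RS_op m d V) = complex_of_real (\<Sum>i<m. (v i)\<^sup>2 * real (k i))"
proof -
  have c: "\<And>i. i < m \<Longrightarrow> V i \<in> carrier_mat (k i) d"
    using Pv_system[OF assms] unfolding is_system_def by auto
  have e: "\<And>i. i < m \<Longrightarrow> V i * adj (V i) = complex_of_real ((v i)\<^sup>2) \<cdot>\<^sub>m 1\<^sub>m (k i)"
    using assms unfolding Pv_def by auto
  have "mtrace (RS_op m d V) = (\<Sum>i<m. mtrace (adj (V i) * V i))"
    unfolding RS_op_mat_sum by (rule mtrace_mat_sum) (metis c adj_carrier mult_carrier_mat)
  also have "\<dots> = (\<Sum>i<m. complex_of_real ((v i)\<^sup>2 * real (k i)))"
  proof (intro sum.cong refl)
    fix i assume "i \<in> {..<m}" hence i: "i < m" by simp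
    have "mtrace (adj (V i) * V i) = mtrace (V i * adj (V i))"
      using c[OF i] by (intro mtrace_comm) auto
    also have "\<dots> = complex_of_real ((v i)\<^sup>2) * of_nat (k i)"
      unfolding e[OF i] by (simp add: mtrace_smult[of _ "k i"] mtrace_one)
    finally show "mtrace (adj (V i) * V i) = complex_of_real ((v i)\<^sup>2 * real (k i))" by simp
  qed
  finally show ?thesis by (simp add: of_real_sum)
qed

lemma trace_cross_op: assumes "is_system m k d W" "is_system m k d V"
  shows "mtrace (cross_op m d W V) = (\<Sum>i<m. \<Sum>b<d. \<Sum>a<k i. cnj (W i $$ (a,b)) * V i $$ (a,b))"
proof -
  have c: "\<And>i. i < m \<Longrightarrow> W i \<in> carrier_mat (k i) d" "\<And>i. i < m \<Longrightarrow> V i \<in> carrier_mat (k i) d"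
    using assms unfolding is_system_def by auto
  have "mtrace (cross_op m d W V) = (\<Sum>i<m. mtrace (adj (W i) * V i))"
    unfolding cross_op_mat_sum by (rule mtrace_mat_sum) (metis c adj_carrier mult_carrier_mat)
  thus ?thesis by (simp add: mtrace_adj_mult[OF c(1) c(2)])
qed

(* Every dual W of a weighted V satisfies tr S_W >= d^2/tau: expand
   0 <= sum_i |W_i - s V_i|^2 = tr S_W - 2 s d + s^2 tau at s = d/tau. *)
lemma dual_trace_lower_bound:
  assumes V: "V \<in> Pv v m k d" and W: "W \<in> RS m k d" and C: "cross_op m d W V = 1\<^sub>m d"
  and tau: "\<tau> = (\<Sum>i<m. (v i)\<^sup>2 * real (k i))" "\<tau> > 0"
  shows "Re (mtrace (RS_op m d W)) \<ge> (real d)\<^sup>2 / \<tau>"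
proof -
  define s where "s = real d / \<tau>"
  have sW: "is_system m k d W" using W unfolding RS_def by auto
  have sV: "is_system m k d V" using Pv_system[OF V] .
  define F where "F i a b = W i $$ (a,b)" for i a b
  define G where "G i a b = V i $$ (a,b)" for i a b
  have tW: "Re (mtrace (RS_op m d W)) = (\<Sum>i<m. \<Sum>b<d. \<Sum>a<k i. (cmod (F i a b))\<^sup>2)"
    using trace_RS_op[OF sW] unfolding F_def by simp
  have tV: "\<tau> = (\<Sum>i<m. \<Sum>b<d. \<Sum>a<k i. (cmod (G i a b))\<^sup>2)"
  proof -
    have "complex_of_real \<tau> = complex_of_real (\<Sum>i<m. \<Sum>b<d. \<Sum>a<k i. (cmod (G i a b))\<^sup>2)"
      using trace_RS_op[OF sV] trace_RS_op_Pv[OF V] unfolding G_def tau(1) by metis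
    thus ?thesis by (simp only: of_real_eq_iff)
  qed
  have tC: "real d = (\<Sum>i<m. \<Sum>b<d. \<Sum>a<k i. Re (cnj (F i a b) * G i a b))"
  proof -
    have "Re (mtrace (cross_op m d W V)) = real d" using C by (simp add: mtrace_one)
    thus ?thesis using trace_cross_op[OF sW sV] unfolding F_def G_def by simp
  qed
  have sq: "(cmod (f - complex_of_real s * g))\<^sup>2 = (cmod f)\<^sup>2 - 2 * s * Re (cnj f * g) + s\<^sup>2 * (cmod g)\<^sup>2"
    for f g by (simp only: cmod_power2) (simp add: power2_diff algebra_simps power2_eq_square)
  have "0 \<le> (\<Sum>i<m. \<Sum>b<d. \<Sum>a<k i. (cmod (F i a b - complex_of_real s * G i a b))\<^sup>2)"
    by (intro sum_nonneg) auto
  also have "\<dots> = (\<Sum>i<m. \<Sum>b<d. \<Sum>a<k i. (cmod (F i a b))\<^sup>2 - 2 * s * Re (cnj (F i a b) * G i a b)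
      + s\<^sup>2 * (cmod (G i a b))\<^sup>2)"
    by (simp only: sq)
  also have "\<dots> = Re (mtrace (RS_op m d W)) - 2 * s * real d + s\<^sup>2 * \<tau>"
    unfolding tW tV tC by (simp only: sum.distrib sum_subtractf sum_distrib_left)
  finally have "Re (mtrace (RS_op m d W)) \<ge> 2 * s * real d - s\<^sup>2 * \<tau>" by simp
  moreover have "2 * s * real d - s\<^sup>2 * \<tau> = (real d)\<^sup>2 / \<tau>"
    unfolding s_def using tau(2) by (simp add: field_simps power2_eq_square)
  ultimately show ?thesis by simp
qed

lemma FP_lower_bound:
  assumes DW: "(V, W) \<in> DRS v m k d" and d: "d \<ge> 1"
  and tau: "\<tau> = (\<Sum>i<m. (v i)\<^sup>2 * real (k i))" "\<tau> > 0"
  shows "\<tau>\<^sup>2 / real d + (real d)^3 / \<tau>\<^sup>2 \<le> FP m d V W"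
proof -
  have V: "V \<in> Pv v m k d" and W: "W \<in> RS m k d" and C: "cross_op m d W V = 1\<^sub>m d"
    using DW unfolding DRS_def duals_def by auto
  have sW: "is_system m k d W" using W unfolding RS_def by auto
  have trV: "Re (mtrace (RS_op m d V)) = \<tau>" using trace_RS_op_Pv[OF V] tau(1) by simp
  have "Re (mtrace (RS_op m d V * RS_op m d V)) \<ge> 2 * (\<tau> / real d) * \<tau> - (\<tau> / real d)\<^sup>2 * real d"
    using herm_trace_square_lower_bound[OF RS_op_carrier RS_op_herm[OF Pv_system[OF V]]]
    unfolding trV .
  hence bV: "Re (mtrace (RS_op m d V * RS_op m d V)) \<ge> \<tau>\<^sup>2 / real d"
    using tau(2) d by (simp add: field_simps power2_eq_square)
  define t where "t = Re (mtrace (RS_op m d W))"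
  have t: "t \<ge> (real d)\<^sup>2 / \<tau>" unfolding t_def by (rule dual_trace_lower_bound[OF V W C tau])
  have "Re (mtrace (RS_op m d W * RS_op m d W)) \<ge> 2 * (real d / \<tau>) * t - (real d / \<tau>)\<^sup>2 * real d"
    unfolding t_def by (rule herm_trace_square_lower_bound[OF RS_op_carrier RS_op_herm[OF sW]])
  moreover have "2 * (real d / \<tau>) * t - (real d / \<tau>)\<^sup>2 * real d \<ge> (real d)^3 / \<tau>\<^sup>2"
  proof -
    have "2 * (real d / \<tau>) * t \<ge> 2 * (real d / \<tau>) * ((real d)\<^sup>2 / \<tau>)"
      using t tau(2) by (intro mult_left_mono) auto
    thus ?thesis using tau(2) by (simp add: field_simps power2_eq_square power3_eq_cube)
  qed
  ultimately show ?thesis using bV unfolding FP_def by simp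
qed

lemma tight_imp_global:
  assumes V: "V \<in> Pv v m k d" and d: "d \<ge> 1"
  and tau: "\<tau> = (\<Sum>i<m. (v i)\<^sup>2 * real (k i))" "\<tau> > 0"
  and S: "RS_op m d V = complex_of_real (\<tau> / real d) \<cdot>\<^sub>m 1\<^sub>m d"
  shows "global_min_FP v m k d V (can_dual m d V)"
proof -
  define T where "T = complex_of_real (real d / \<tau>) \<cdot>\<^sub>m 1\<^sub>m d"
  have ST: "RS_op m d V * T = 1\<^sub>m d" unfolding S T_def smult_one_mult_smult_one using tau(2) d
    by (simp flip: of_real_mult)
  have T: "inv_cof (RS_op m d V) = T"
    using minv_unique[OF RS_op_carrier _ ST] inv_cof(3)[OF RS_op_carrier Pv_det[OF V]] T_def by simp
  have "FP m d V (can_dual m d V) = \<tau>\<^sup>2 / real d + (real d)^3 / \<tau>\<^sup>2"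
    unfolding FP_can_dual[OF V] T unfolding S T_def smult_one_mult_smult_one
    using d tau(2) by (simp add: mtrace_smult[of _ d] mtrace_one field_simps power2_eq_square
        power3_eq_cube flip: of_real_mult)
  thus ?thesis unfolding global_min_FP_def using can_dual_DRS[OF V] FP_lower_bound[OF _ d tau] by auto
qed

section \<open>Derivatives of matrix-valued curves\<close>

definition mat_deriv :: "(real \<Rightarrow> complex mat) \<Rightarrow> complex mat \<Rightarrow> real \<Rightarrow> nat \<Rightarrow> nat \<Rightarrow> bool" where
  "mat_deriv A D x r c \<longleftrightarrow> (\<forall>t. A t \<in> carrier_mat r c) \<and> D \<in> carrier_mat r c \<and>
     (\<forall>a<r. \<forall>b<c. ((\<lambda>t. A t $$ (a,b)) has_vector_derivative D $$ (a,b)) (at x))"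

lemma mat_derivD:
  "mat_deriv A D x r c \<Longrightarrow> A t \<in> carrier_mat r c"
  "mat_deriv A D x r c \<Longrightarrow> D \<in> carrier_mat r c"
  "mat_deriv A D x r c \<Longrightarrow> a < r \<Longrightarrow> b < c \<Longrightarrow>
     ((\<lambda>t. A t $$ (a,b)) has_vector_derivative D $$ (a,b)) (at x)"
  unfolding mat_deriv_def by auto

lemma mat_derivI: assumes "\<And>t. A t \<in> carrier_mat r c" "D \<in> carrier_mat r c"
  "\<And>a b. a < r \<Longrightarrow> b < c \<Longrightarrow> ((\<lambda>t. A t $$ (a,b)) has_vector_derivative D $$ (a,b)) (at x)"
  shows "mat_deriv A D x r c"
  using assms unfolding mat_deriv_def by auto

lemma mat_deriv_cong: "mat_deriv A D x r c \<Longrightarrow> (\<And>t. A t = B t) \<Longrightarrow> D = E \<Longrightarrow> mat_deriv B E x r c"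
  by (metis ext)

lemma has_vector_derivative_cong:
  "(\<And>t. f t = g t) \<Longrightarrow> D = E \<Longrightarrow> (g has_vector_derivative E) F \<Longrightarrow> (f has_vector_derivative D) F"
  by (metis ext)

lemma mat_deriv_const: "A \<in> carrier_mat r c \<Longrightarrow> mat_deriv (\<lambda>t. A) (0\<^sub>m r c) x r c"
  unfolding mat_deriv_def by (auto intro: has_vector_derivative_const)

lemma mat_deriv_linear: assumes "A \<in> carrier_mat n n" "X \<in> carrier_mat n n"
  shows "mat_deriv (\<lambda>t. A + complex_of_real t \<cdot>\<^sub>m X) X x n n"
  unfolding mat_deriv_def
proof (intro conjI allI impI)
  fix a b assume ab: "a < n" "b < n"
  have e: "(\<lambda>t. (A + complex_of_real t \<cdot>\<^sub>m X) $$ (a,b)) = (\<lambda>t. A $$ (a,b) + t *\<^sub>R X $$ (a,b))"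
    using assms ab by (auto simp: scaleR_conv_of_real)
  have "((\<lambda>t. t *\<^sub>R X $$ (a,b)) has_vector_derivative 1 *\<^sub>R X $$ (a,b)) (at x)"
    by (rule bounded_linear.has_vector_derivative[OF bounded_linear_scaleR_left has_vector_derivative_id])
  hence "((\<lambda>t. A $$ (a,b) + t *\<^sub>R X $$ (a,b)) has_vector_derivative 0 + 1 *\<^sub>R X $$ (a,b)) (at x)"
    by (rule has_vector_derivative_add[OF has_vector_derivative_const])
  thus "((\<lambda>t. (A + complex_of_real t \<cdot>\<^sub>m X) $$ (a,b)) has_vector_derivative X $$ (a,b)) (at x)"
    unfolding e by simp
qed (use assms in auto)

lemma mat_deriv_add: assumes A: "mat_deriv A D x r c" and B: "mat_deriv B E x r c"
  shows "mat_deriv (\<lambda>t. A t + B t) (D + E) x r c"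
proof (rule mat_derivI)
  fix a b assume ab: "a < r" "b < c"
  show "((\<lambda>t. (A t + B t) $$ (a,b)) has_vector_derivative (D + E) $$ (a,b)) (at x)"
  proof (rule has_vector_derivative_cong[OF _ _
        has_vector_derivative_add[OF mat_derivD(3)[OF A ab] mat_derivD(3)[OF B ab]]])
    fix t show "(A t + B t) $$ (a,b) = A t $$ (a,b) + B t $$ (a,b)"
      using ab mat_derivD(1)[OF A, of t] mat_derivD(1)[OF B, of t] by auto
  qed (use ab mat_derivD(2)[OF A] mat_derivD(2)[OF B] in auto)
qed (use mat_derivD(1,2)[OF A] mat_derivD(1,2)[OF B] in auto)

lemma mat_deriv_mult: assumes A: "mat_deriv A D x r n" and B: "mat_deriv B E x n c"
  shows "mat_deriv (\<lambda>t. A t * B t) (A x * E + D * B x) x r c"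
  unfolding mat_deriv_def
proof (intro conjI allI impI)
  have Ac: "\<And>t. A t \<in> carrier_mat r n" "D \<in> carrier_mat r n" using mat_derivD[OF A] by auto
  have Bc: "\<And>t. B t \<in> carrier_mat n c" "E \<in> carrier_mat n c" using mat_derivD[OF B] by auto
  show "A t * B t \<in> carrier_mat r c" for t using Ac(1)[of t] Bc(1)[of t] by auto
  show "A x * E + D * B x \<in> carrier_mat r c" using Ac Bc by auto
  fix a b assume ab: "a < r" "b < c"
  have e: "(\<lambda>t. (A t * B t) $$ (a,b)) = (\<lambda>t. \<Sum>i\<in>{0..<n}. A t $$ (a,i) * B t $$ (i,b))"
  proof (rule ext)
    fix t show "(A t * B t) $$ (a,b) = (\<Sum>i\<in>{0..<n}. A t $$ (a,i) * B t $$ (i,b))"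
      using Ac(1)[of t] Bc(1)[of t] ab by (auto simp: scalar_prod_def)
  qed
  have "((\<lambda>t. \<Sum>i\<in>{0..<n}. A t $$ (a,i) * B t $$ (i,b)) has_vector_derivative
        (\<Sum>i\<in>{0..<n}. A x $$ (a,i) * E $$ (i,b) + D $$ (a,i) * B x $$ (i,b))) (at x)"
    by (intro has_vector_derivative_sum has_vector_derivative_mult mat_derivD(3)[OF A] mat_derivD(3)[OF B])
      (use ab in auto)
  also have "(\<Sum>i\<in>{0..<n}. A x $$ (a,i) * E $$ (i,b) + D $$ (a,i) * B x $$ (i,b)) = (A x * E + D * B x) $$ (a,b)"
    using Ac(1)[of x] Ac(2) Bc(1)[of x] Bc(2) ab by (auto simp: scalar_prod_def sum.distrib)
  finally show "((\<lambda>t. (A t * B t) $$ (a,b)) has_vector_derivative (A x * E + D * B x) $$ (a,b)) (at x)"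
    unfolding e .
qed

lemma mat_deriv_adj: assumes A: "mat_deriv A D x r c"
  shows "mat_deriv (\<lambda>t. adj (A t)) (adj D) x c r"
proof (rule mat_derivI)
  fix i j assume ab: "i < c" "j < r"
  show "((\<lambda>t. adj (A t) $$ (i,j)) has_vector_derivative adj D $$ (i,j)) (at x)"
  proof (rule has_vector_derivative_cong[OF _ _
        bounded_linear.has_vector_derivative[OF bounded_linear_cnj mat_derivD(3)[OF A ab(2,1)]]])
    fix t show "adj (A t) $$ (i,j) = cnj (A t $$ (j,i))" using ab mat_derivD(1)[OF A, of t] by auto
  qed (use ab mat_derivD(2)[OF A] in auto)
qed (use mat_derivD(1,2)[OF A] in auto)

lemma mat_deriv_trace: assumes "mat_deriv A D x n n"
  shows "((\<lambda>t. Re (mtrace (A t))) has_real_derivative Re (mtrace D)) (at x)"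
proof -
  have e: "(\<lambda>t. Re (mtrace (A t))) = (\<lambda>t. Re (\<Sum>a<n. A t $$ (a,a)))"
  proof (rule ext)
    fix t show "Re (mtrace (A t)) = Re (\<Sum>a<n. A t $$ (a,a))"
      using mat_derivD(1)[OF assms, of t] unfolding mtrace_def by auto
  qed
  have "mtrace D = (\<Sum>a<n. D $$ (a,a))" using mat_derivD(2)[OF assms] unfolding mtrace_def by auto
  thus ?thesis unfolding e has_real_derivative_iff_has_vector_derivative
    by (auto intro!: bounded_linear.has_vector_derivative[OF bounded_linear_Re]
        has_vector_derivative_sum mat_derivD(3)[OF assms])
qed

lemma mat_deriv_entry_differentiable:
  "mat_deriv A D x r c \<Longrightarrow> a < r \<Longrightarrow> b < c \<Longrightarrow> (\<lambda>t. A t $$ (a,b)) differentiable (at x)"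
  using mat_derivD(3) has_vector_derivative_def differentiable_def by metis

lemma mat_deriv_tendsto: "mat_deriv A D x r c \<Longrightarrow> a < r \<Longrightarrow> b < c \<Longrightarrow>
    ((\<lambda>t. A t $$ (a,b)) \<longlongrightarrow> A x $$ (a,b)) (at x)"
  using mat_deriv_entry_differentiable differentiable_imp_continuous_within isCont_def by blast

lemma differentiable_prod_at:
  fixes f :: "'i \<Rightarrow> real \<Rightarrow> complex"
  assumes "\<And>i. i \<in> I \<Longrightarrow> f i differentiable (at x)"
  shows "(\<lambda>t. \<Prod>i\<in>I. f i t) differentiable (at x)"
proof -
  obtain f' where "\<And>i. i \<in> I \<Longrightarrow> (f i has_derivative f' i) (at x)"
    using assms unfolding differentiable_def by metis
  thus ?thesis unfolding differentiable_def by (blast intro: has_derivative_prod)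
qed

(* Leibniz's formula makes the determinant a polynomial in the entries. *)
lemma det_differentiable:
  fixes B :: "real \<Rightarrow> complex mat"
  assumes B: "\<And>t. B t \<in> carrier_mat n n"
  and e: "\<And>a b. a < n \<Longrightarrow> b < n \<Longrightarrow> (\<lambda>t. B t $$ (a,b)) differentiable (at x)"
  shows "(\<lambda>t. Determinant.det (B t)) differentiable (at x)"
proof -
  have entry: "(\<lambda>t. B t $$ (i, p i)) differentiable (at x)" if "p permutes {0..<n}" "i \<in> {0..<n}" for p i
  proof -
    have "p i \<in> {0..<n}" using that by (simp add: permutes_in_image)
    thus ?thesis using that(2) by (intro e) auto
  qed
  have "(\<lambda>t. \<Sum>p\<in>{p. p permutes {0..<n}}. signof p * (\<Prod>i = 0..<n. B t $$ (i, p i))) differentiable (at x)"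
  proof (rule differentiable_sum[rule_format])
    show "finite {p. p permutes {0..<n}}" by (rule finite_permutations) simp
    fix p assume "p \<in> {p. p permutes {0..<n}}"
    then show "(\<lambda>t. signof p * (\<Prod>i = 0..<n. B t $$ (i, p i))) differentiable (at x)"
      using entry by (intro differentiable_mult differentiable_const differentiable_prod_at) auto
  qed
  thus ?thesis using det_def'[OF B] by simp
qed

lemma det_nonzero_near: assumes A: "mat_deriv A D x n n" and d: "Determinant.det (A x) \<noteq> 0"
  shows "\<exists>e>0. \<forall>y. dist x y < e \<longrightarrow> Determinant.det (A y) \<noteq> 0"
proof -
  have "(\<lambda>t. Determinant.det (A t)) differentiable (at x)"
    by (rule det_differentiable[OF mat_derivD(1)[OF A]]) (rule mat_deriv_entry_differentiable[OF A])
  hence "isCont (\<lambda>t. Determinant.det (A t)) x" by (rule differentiable_imp_continuous_within)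
  from this d show ?thesis by (rule continuous_at_avoid)
qed

(* Entries of the inverse are cofactors over the determinant, hence differentiable. *)
lemma inv_cof_entry_differentiable:
  assumes A: "mat_deriv A D x n n" and d: "Determinant.det (A x) \<noteq> 0" and ab: "a < n" "b < n"
  shows "(\<lambda>t. inv_cof (A t) $$ (a,b)) differentiable (at x)"
proof -
  have Ac: "\<And>t. A t \<in> carrier_mat n n" using mat_derivD(1)[OF A] .
  have e: "inv_cof (A t) $$ (a,b) =
      inverse (Determinant.det (A t)) * ((-1)^(b+a) * Determinant.det (mat_delete (A t) b a))" for t
    unfolding inv_cof_def adj_mat_def cofactor_def using Ac[of t] ab by (simp add: field_simps)
  have dA: "(\<lambda>t. Determinant.det (A t)) differentiable (at x)"
    by (rule det_differentiable[OF Ac]) (rule mat_deriv_entry_differentiable[OF A])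
  have "(\<lambda>t. Determinant.det (mat_delete (A t) b a)) differentiable (at x)"
  proof (rule det_differentiable)
    show "mat_delete (A t) b a \<in> carrier_mat (n-1) (n-1)" for t using mat_delete_carrier[OF Ac] .
    fix i j assume ij: "i < n - 1" "j < n - 1"
    have "(\<lambda>t. A t $$ (if i < b then i else Suc i, if j < a then j else Suc j)) differentiable (at x)"
      by (rule mat_deriv_entry_differentiable[OF A]) (use ij in auto)
    moreover have "mat_delete (A t) b a $$ (i, j) = A t $$ (if i < b then i else Suc i, if j < a then j else Suc j)" for t
      unfolding mat_delete_def using Ac[of t] ij by auto
    ultimately show "(\<lambda>t. mat_delete (A t) b a $$ (i, j)) differentiable (at x)" by simp
  qed
  thus ?thesis unfolding e using dA d by simp
qed

(* Derivative of the inverse: (A^-1)' = - A^-1 A' A^-1, obtained by differentiating A^-1 A = I. *)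
lemma mat_deriv_inv_cof: assumes A: "mat_deriv A D x n n" and d: "Determinant.det (A x) \<noteq> 0"
  shows "mat_deriv (\<lambda>t. inv_cof (A t)) (- (inv_cof (A x) * D * inv_cof (A x))) x n n"
proof -
  define E where "E = mat n n (\<lambda>(a,b). vector_derivative (\<lambda>t. inv_cof (A t) $$ (a,b)) (at x))"
  have Ax: "A x \<in> carrier_mat n n" and Dc: "D \<in> carrier_mat n n" using mat_derivD[OF A] by auto
  have Tc: "inv_cof (A x) \<in> carrier_mat n n" using Ax by simp
  hence Td: "dim_row (inv_cof (A x)) = n" "dim_col (inv_cof (A x)) = n" by auto
  have Ec: "E \<in> carrier_mat n n" unfolding E_def by simp
  have E: "mat_deriv (\<lambda>t. inv_cof (A t)) E x n n"
  proof (rule mat_derivI)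
    fix a b assume ab: "a < n" "b < n"
    show "((\<lambda>t. inv_cof (A t) $$ (a,b)) has_vector_derivative E $$ (a,b)) (at x)"
      using inv_cof_entry_differentiable[OF A d ab] unfolding vector_derivative_works E_def
      using ab by simp
  qed (use mat_derivD(1)[OF A] Ec in auto)
  obtain e where e: "e > 0" "\<And>y. dist x y < e \<Longrightarrow> Determinant.det (A y) \<noteq> 0"
    using det_nonzero_near[OF A d] by auto
  have EA: "E * A x = - (inv_cof (A x) * D)"
  proof (rule eq_matI)
    fix a b assume "a < dim_row (- (inv_cof (A x) * D))" "b < dim_col (- (inv_cof (A x) * D))"
    hence ab: "a < n" "b < n" using Tc Dc by auto
    have h1: "((\<lambda>t. (inv_cof (A t) * A t) $$ (a,b)) has_vector_derivative
        (inv_cof (A x) * D + E * A x) $$ (a,b)) (at x)"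
      using mat_derivD(3)[OF mat_deriv_mult[OF E A] ab] .
    have h2: "((\<lambda>t. (inv_cof (A t) * A t) $$ (a,b)) has_vector_derivative 0) (at x)"
    proof (rule has_vector_derivative_transform_within_open[OF has_vector_derivative_const[of "1\<^sub>m n $$ (a,b)"]])
      show "open (ball x e)" "x \<in> ball x e" using e by auto
      fix y assume "y \<in> ball x e"
      hence "inv_cof (A y) * A y = 1\<^sub>m n" using e inv_cof(2)[OF mat_derivD(1)[OF A]] by auto
      thus "1\<^sub>m n $$ (a,b) = (inv_cof (A y) * A y) $$ (a,b)" by simp
    qed
    have "(inv_cof (A x) * D + E * A x) $$ (a,b) = 0" using vector_derivative_unique_at[OF h1 h2] by simp
    hence "(inv_cof (A x) * D) $$ (a,b) + (E * A x) $$ (a,b) = 0" using ab Ec Ax by simp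
    thus "(E * A x) $$ (a,b) = (- (inv_cof (A x) * D)) $$ (a,b)"
      using ab Tc Dc by (simp add: eq_neg_iff_add_eq_0 add.commute)
  qed (use Td Dc Ec Ax in auto)
  have "E = E * (A x * inv_cof (A x))" using inv_cof(1)[OF Ax d] Ec by simp
  also have "\<dots> = (E * A x) * inv_cof (A x)" using assoc_mult_mat[OF Ec Ax Tc] by simp
  also have "\<dots> = - (inv_cof (A x) * D * inv_cof (A x))" unfolding EA
    by (rule uminus_mult_left_mat) (use Tc Dc in auto)
  finally show ?thesis using E by simp
qed

section \<open>The Cayley curve of a skew-Hermitian matrix\<close>

(* U(t) = (I + tK)(I - tK)^-1, a curve through I with velocity 2K; it is unitary wherever
   I - tK is invertible when K is skew-Hermitian. *)
definition cayley :: "nat \<Rightarrow> complex mat \<Rightarrow> real \<Rightarrow> complex mat" where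
  "cayley d K t = (1\<^sub>m d + complex_of_real t \<cdot>\<^sub>m K) * inv_cof (1\<^sub>m d + complex_of_real t \<cdot>\<^sub>m (- K))"

lemma cayley_carrier[simp]: "K \<in> carrier_mat d d \<Longrightarrow> cayley d K t \<in> carrier_mat d d"
  unfolding cayley_def by (meson add_carrier_mat inv_cof_carrier mult_carrier_mat one_carrier_mat
      smult_carrier_mat uminus_carrier_mat)

lemma smult_mult_smult: assumes "X \<in> carrier_mat n k" "Y \<in> carrier_mat k l"
  shows "(a \<cdot>\<^sub>m X) * (b \<cdot>\<^sub>m Y) = ((a * b)::complex) \<cdot>\<^sub>m (X * Y)"
proof -
  have "(a \<cdot>\<^sub>m X) * (b \<cdot>\<^sub>m Y) = a \<cdot>\<^sub>m (X * (b \<cdot>\<^sub>m Y))" by (rule mult_smult_assoc_mat) (use assms in auto)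
  also have "X * (b \<cdot>\<^sub>m Y) = b \<cdot>\<^sub>m (X * Y)" by (rule mult_smult_distrib) (use assms in auto)
  finally show ?thesis by (simp add: smult_smult_mat)
qed

lemma one_plus_comm: assumes A: "A \<in> carrier_mat d d" and B: "B \<in> carrier_mat d d"
  and AB: "A * B = B * (A :: complex mat)"
  shows "(1\<^sub>m d + A) * (1\<^sub>m d + B) = (1\<^sub>m d + B) * (1\<^sub>m d + A)"
proof -
  have e1: "(1\<^sub>m d + A) * (1\<^sub>m d + B) = (1\<^sub>m d + A) + ((1\<^sub>m d + A) * B)"
    by (subst mult_add_distrib_mat[of "1\<^sub>m d + A" d d "1\<^sub>m d" d B]) (use A B in auto)
  have e2: "(1\<^sub>m d + A) * B = B + A * B"
    by (subst add_mult_distrib_mat[of "1\<^sub>m d" d d A B d]) (use A B in auto)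
  have e3: "(1\<^sub>m d + B) * (1\<^sub>m d + A) = (1\<^sub>m d + B) + ((1\<^sub>m d + B) * A)"
    by (subst mult_add_distrib_mat[of "1\<^sub>m d + B" d d "1\<^sub>m d" d A]) (use A B in auto)
  have e4: "(1\<^sub>m d + B) * A = A + B * A"
    by (subst add_mult_distrib_mat[of "1\<^sub>m d" d d B A d]) (use A B in auto)
  show ?thesis unfolding e1 e2 e3 e4 AB using A B by (intro eq_matI) auto
qed

(* With L = I - tK and M = I + tK = L^*, which commute, U = M L^-1 satisfies
   U^* U = M^-1 L M L^-1 = I. *)
lemma cayley_unitary:
  assumes K: "K \<in> carrier_mat d d" and sk: "adj K = - K"
    and det: "Determinant.det (1\<^sub>m d + complex_of_real t \<cdot>\<^sub>m (- K)) \<noteq> 0"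
  shows "cayley d K t * adj (cayley d K t) = 1\<^sub>m d"
proof -
  define L where "L = 1\<^sub>m d + complex_of_real t \<cdot>\<^sub>m (- K)"
  define M where "M = 1\<^sub>m d + complex_of_real t \<cdot>\<^sub>m K"
  have Lc: "L \<in> carrier_mat d d" and Mc: "M \<in> carrier_mat d d" unfolding L_def M_def using K by auto
  have IL: "inv_cof L \<in> carrier_mat d d" and IM: "inv_cof M \<in> carrier_mat d d" using Lc Mc by auto
  have dL: "Determinant.det L \<noteq> 0" using det unfolding L_def .
  have aM: "adj M = L" unfolding M_def L_def using K sk by (simp add: adj_add[of _ d d] adj_smult)
  hence aL: "adj L = M" by (metis adj_adj)
  have dM: "Determinant.det M \<noteq> 0" using adj_inv_cof(2)[OF Lc dL] unfolding aL .
  have comm: "L * M = M * L" unfolding L_def M_def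
    by (rule one_plus_comm) (use K smult_mult_smult[OF K K, of "complex_of_real t" "- complex_of_real t"]
        smult_mult_smult[OF K K, of "- complex_of_real t" "complex_of_real t"]
        in \<open>auto simp: uminus_mult_left_mat mult.commute\<close>)
  have U: "cayley d K t = M * inv_cof L" unfolding cayley_def L_def M_def ..
  have "adj (cayley d K t) = inv_cof M * L"
    unfolding U adj_mult[OF Mc IL] adj_inv_cof(1)[OF Lc dL] aL aM ..
  hence "adj (cayley d K t) * cayley d K t = inv_cof M * (L * M) * inv_cof L"
    unfolding U using mult_assoc4[OF IM Lc Mc IL] by simp
  also have "\<dots> = (inv_cof M * M) * (L * inv_cof L)" unfolding comm using mult_assoc4[OF IM Mc Lc IL] .
  also have "\<dots> = 1\<^sub>m d" using inv_cof(1)[OF Lc dL] inv_cof(2)[OF Mc dM] by simp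
  finally show ?thesis using mat_mult_left_right_inverse[of "adj (cayley d K t)" d "cayley d K t"] K by auto
qed

lemma cayley_curve: assumes K: "K \<in> carrier_mat d d" and sk: "adj K = - K"
  shows "cayley d K 0 = 1\<^sub>m d" "mat_deriv (cayley d K) (K + K) 0 d d"
    "\<exists>e>0. \<forall>t. dist 0 t < e \<longrightarrow> cayley d K t * adj (cayley d K t) = 1\<^sub>m d"
proof -
  let ?L = "\<lambda>t. 1\<^sub>m d + complex_of_real t \<cdot>\<^sub>m (- K)" and ?M = "\<lambda>t. 1\<^sub>m d + complex_of_real t \<cdot>\<^sub>m K"
  have at0: "?L 0 = 1\<^sub>m d" "?M 0 = 1\<^sub>m d" using K by (auto intro!: eq_matI)
  show "cayley d K 0 = 1\<^sub>m d" unfolding cayley_def at0 by simp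
  have mL: "mat_deriv ?L (- K) 0 d d" by (rule mat_deriv_linear) (use K in auto)
  have mM: "mat_deriv ?M K 0 d d" by (rule mat_deriv_linear) (use K in auto)
  have det0: "Determinant.det (?L 0) \<noteq> 0" unfolding at0 by simp
  have mN: "mat_deriv (\<lambda>t. inv_cof (?L t)) K 0 d d"
    using mat_deriv_inv_cof[OF mL det0] unfolding at0 inv_cof_one using K by simp
  have e: "?M 0 * K + K * inv_cof (?L 0) = K + K" unfolding at0 using K by simp
  show "mat_deriv (cayley d K) (K + K) 0 d d"
    using mat_deriv_mult[OF mM mN] unfolding e cayley_def[abs_def] .
  obtain e where "e > 0" "\<And>t. dist 0 t < e \<Longrightarrow> Determinant.det (?L t) \<noteq> 0"
    using det_nonzero_near[OF mL det0] by auto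
  thus "\<exists>e>0. \<forall>t. dist 0 t < e \<longrightarrow> cayley d K t * adj (cayley d K t) = 1\<^sub>m d"
    using cayley_unitary[OF K sk] by blast
qed

section \<open>Descent away from non-stationary systems\<close>

lemma eventually_at_of_near:
  "\<exists>e>0. \<forall>y. dist x y < e \<longrightarrow> P y \<Longrightarrow> eventually P (at x within S)"
  unfolding eventually_at by (metis dist_commute)

lemma herm_diff_cube: assumes S: "S \<in> carrier_mat d d" and T: "T \<in> carrier_mat d d"
  and hS: "adj S = S" and hT: "adj T = T"
  shows "adj (S - T * T * T) = S - T * T * T"
proof -
  have "adj (T * T * T) = T * T * T" using T hT
    by (simp add: adj_mult[of _ d d _ d] assoc_mult_mat[of _ d d _ d _ d])
  thus ?thesis using S T hS by (simp add: adj_minus[of _ d d])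
qed

lemma potential_derivative:
  assumes S: "mat_deriv S D x d d" and det: "Determinant.det (S x) \<noteq> 0"
  shows "((\<lambda>t. Re (mtrace (S t * S t)) + Re (mtrace (inv_cof (S t) * inv_cof (S t))))
      has_real_derivative 2 * Re (mtrace ((S x - inv_cof (S x) * inv_cof (S x) * inv_cof (S x)) * D))) (at x)"
proof -
  define T where "T = inv_cof (S x)"
  have Sx: "S x \<in> carrier_mat d d" and Dc: "D \<in> carrier_mat d d" using mat_derivD[OF S] by auto
  have Tc: "T \<in> carrier_mat d d" unfolding T_def using Sx by simp
  have TDT: "T * D * T \<in> carrier_mat d d" using Tc Dc by auto
  note Tm = mat_deriv_inv_cof[OF S det]
  have deriv: "((\<lambda>t. Re (mtrace (S t * S t)) + Re (mtrace (inv_cof (S t) * inv_cof (S t))))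
      has_real_derivative Re (mtrace (S x * D + D * S x)) + Re (mtrace (T * - (T * D * T) + - (T * D * T) * T))) (at x)"
    unfolding T_def by (rule DERIV_add[OF mat_deriv_trace[OF mat_deriv_mult[OF S S]]
          mat_deriv_trace[OF mat_deriv_mult[OF Tm Tm]]])
  have tS: "mtrace (S x * D + D * S x) = 2 * mtrace (S x * D)"
    using mtrace_add[of "S x * D" d "D * S x"] mtrace_comm[OF Dc Sx] Sx Dc by auto
  have "mtrace (T * - (T * D * T)) = - mtrace (T * (T * D * T))"
  proof -
    have "T * - (T * D * T) = - (T * (T * D * T))" by (rule uminus_mult_right_mat) (use Tc TDT in auto)
    thus ?thesis using mtrace_uminus[of "T * (T * D * T)" d] Tc TDT by auto
  qed
  also have "T * (T * D * T) = (T * T * D) * T" using Tc Dc by (simp add: assoc_mult_mat[of _ d d _ d _ d])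
  also have "mtrace ((T * T * D) * T) = mtrace (T * T * T * D)"
    using mtrace_comm[of "T * T * D" d d T] Tc Dc by (simp add: assoc_mult_mat[of _ d d _ d _ d])
  finally have tT1: "mtrace (T * - (T * D * T)) = - mtrace (T * T * T * D)" .
  have "mtrace (- (T * D * T) * T) = mtrace (T * - (T * D * T))" using Tc TDT by (intro mtrace_comm) auto
  hence tT: "mtrace (T * - (T * D * T) + - (T * D * T) * T) = - 2 * mtrace (T * T * T * D)"
    using mtrace_add[of "T * - (T * D * T)" d "- (T * D * T) * T"] tT1 Tc TDT by auto
  have T3D: "T * T * T * D \<in> carrier_mat d d" using Tc Dc by auto
  have "(S x - T * T * T) * D = S x * D - T * T * T * D"
    using Sx Tc Dc by (intro minus_mult_distrib_mat) auto
  hence tG: "mtrace ((S x - T * T * T) * D) = mtrace (S x * D) - mtrace (T * T * T * D)"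
    by (simp only:) (intro mtrace_minus[of _ d], use Sx Dc T3D in auto)
  show ?thesis using deriv unfolding tS tT T_def[symmetric] tG by simp
qed

(* By cyclicity of the trace, tr(G [P, Y]) = tr([G, P] Y). *)
lemma commutator_trace:
  assumes G: "G \<in> carrier_mat d d" and P: "P \<in> carrier_mat d d" and Y: "Y \<in> carrier_mat d d"
  shows "mtrace (G * (P * Y - Y * P)) = mtrace ((G * P - P * G) * Y)"
proof -
  have "G * (P * Y - Y * P) = G * (P * Y) - G * (Y * P)"
    using G P Y by (intro mult_minus_distrib_mat) auto
  hence "mtrace (G * (P * Y - Y * P)) = mtrace (G * P * Y) - mtrace (G * Y * P)"
    using mtrace_minus[of "G * (P * Y)" d "G * (Y * P)"] G P Y by (auto simp: assoc_mult_mat[of _ d d _ d _ d])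
  also have "mtrace (G * Y * P) = mtrace (P * G * Y)"
    using mtrace_comm[of "G * Y" d d P] G P Y by (simp add: assoc_mult_mat[of _ d d _ d _ d])
  also have "mtrace (G * P * Y) - mtrace (P * G * Y) = mtrace ((G * P - P * G) * Y)"
    using minus_mult_distrib_mat[of "G * P" d d "P * G" Y d] mtrace_minus[of "G * P * Y" d "P * G * Y"] G P Y
    by auto
  finally show ?thesis .
qed

lemma RS_op_rotate:
  assumes sys: "is_system m k d V" and j: "j < m" and U: "U \<in> carrier_mat d d"
  shows "RS_op m d (V(j := V j * U)) = (RS_op m d V - adj (V j) * V j) + adj U * (adj (V j) * V j) * U"
proof -
  have Vj: "V j \<in> carrier_mat (k j) d" using sys j unfolding is_system_def by auto
  have "adj (V j * U) * (V j * U) = adj U * (adj (V j) * V j) * U"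
    unfolding adj_mult[OF Vj U] using mult_assoc4[OF adj_carrier[OF U] adj_carrier[OF Vj] Vj U] by simp
  thus ?thesis using RS_op_upd[OF sys j] Vj U by simp
qed

lemma rotate_in_Pv:
  assumes V: "V \<in> Pv v m k d" and j: "j < m" and U: "U \<in> carrier_mat d d"
    and unit: "U * adj U = 1\<^sub>m d" and det: "Determinant.det (RS_op m d (V(j := V j * U))) \<noteq> 0"
  shows "V(j := V j * U) \<in> Pv v m k d"
  unfolding Pv_def RS_def
proof (intro CollectI conjI allI impI)
  have Vc: "\<And>i. i < m \<Longrightarrow> V i \<in> carrier_mat (k i) d" using Pv_system[OF V] unfolding is_system_def by auto
  show "is_system m k d (V(j := V j * U))"
    unfolding is_system_def using Vc mult_carrier_mat[OF Vc[OF j] U] by auto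
  show "invertible_mat (RS_op m d (V(j := V j * U)))" using det_invertible[OF RS_op_carrier det] .
  fix i assume i: "i < m"
  show "(V(j := V j * U)) i * adj ((V(j := V j * U)) i) = complex_of_real ((v i)\<^sup>2) \<cdot>\<^sub>m 1\<^sub>m (k i)"
  proof (cases "i = j")
    case True
    have Vj: "V j \<in> carrier_mat (k j) d" using Vc[OF j] .
    have "V j * U * adj (V j * U) = V j * (U * adj U) * adj (V j)"
      unfolding adj_mult[OF Vj U] using mult_assoc4[OF Vj U adj_carrier[OF U] adj_carrier[OF Vj]] by simp
    also have "\<dots> = V j * adj (V j)" unfolding unit using Vj by simp
    finally show ?thesis using True V j unfolding Pv_def by auto
  next
    case False
    thus ?thesis using V i unfolding Pv_def by auto
  qed
qed

lemma RS_op_rotate_deriv: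
  assumes sys: "is_system m k d V" and j: "j < m" and U: "mat_deriv U Y 0 d d" and U0: "U 0 = 1\<^sub>m d"
  shows "mat_deriv (\<lambda>t. RS_op m d (V(j := V j * U t)))
      (adj (V j) * V j * Y + adj Y * (adj (V j) * V j)) 0 d d"
proof -
  let ?P = "adj (V j) * V j"
  have Pc: "?P \<in> carrier_mat d d" using system_frame_carrier[OF sys j] .
  have Yc: "Y \<in> carrier_mat d d" using mat_derivD(2)[OF U] .
  have "mat_deriv (\<lambda>t. (RS_op m d V - ?P) + adj (U t) * ?P * U t)
      (0\<^sub>m d d + (adj (U 0) * ?P * Y + (adj (U 0) * 0\<^sub>m d d + adj Y * ?P) * U 0)) 0 d d"
    using Pc by (intro mat_deriv_add[OF mat_deriv_const]
        mat_deriv_mult[OF mat_deriv_mult[OF mat_deriv_adj[OF U] mat_deriv_const[OF Pc]] U])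
      (auto intro: minus_carrier_mat)
  thus ?thesis
    by (rule mat_deriv_cong) (use RS_op_rotate[OF sys j] mat_derivD(1)[OF U] U0 Pc Yc in \<open>auto intro!: eq_matI\<close>)
qed

lemma tendsto_frob0: assumes A: "A \<in> carrier_mat r c" and B: "\<And>t. B t \<in> carrier_mat r c"
  and e: "\<And>a b. a < r \<Longrightarrow> b < c \<Longrightarrow> ((\<lambda>t. B t $$ (a,b)) \<longlongrightarrow> A $$ (a,b)) F"
  shows "((\<lambda>t. frob (A - B t)) \<longlongrightarrow> 0) F"
proof -
  have eq: "frob (A - B t) = sqrt (\<Sum>a<r. \<Sum>b<c. (cmod (A $$ (a,b) - B t $$ (a,b)))\<^sup>2)" for t
    unfolding frob_def using B[of t] A by auto
  have "((\<lambda>t. sqrt (\<Sum>a<r. \<Sum>b<c. (cmod (A $$ (a,b) - B t $$ (a,b)))\<^sup>2)) \<longlongrightarrow>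
      sqrt (\<Sum>a<r. \<Sum>b<c. (cmod (A $$ (a,b) - A $$ (a,b)))\<^sup>2)) F"
    by (intro tendsto_intros e) auto
  thus ?thesis unfolding eq by simp
qed

lemma tendsto_dP0: assumes W0: "\<And>i. i < m \<Longrightarrow> W0 i \<in> carrier_mat (k i) d"
  and W: "\<And>i t. i < m \<Longrightarrow> W t i \<in> carrier_mat (k i) d"
  and e: "\<And>i a b. i < m \<Longrightarrow> a < k i \<Longrightarrow> b < d \<Longrightarrow> ((\<lambda>t. W t i $$ (a,b)) \<longlongrightarrow> W0 i $$ (a,b)) F"
  shows "((\<lambda>t. dP m W0 (W t)) \<longlongrightarrow> 0) F"
proof -
  have "((\<lambda>t. sqrt (\<Sum>i<m. (frob (W0 i - W t i))\<^sup>2)) \<longlongrightarrow> sqrt (\<Sum>i<m. 0\<^sup>2)) F"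
    by (intro tendsto_intros tendsto_frob0[OF W0 W e]) auto
  thus ?thesis unfolding dP_def by simp
qed

lemma not_local_min_by_curve:
  assumes curve: "eventually (\<lambda>t. Vt t \<in> Pv v m k d \<and>
      FP m d (Vt t) (can_dual m d (Vt t)) < FP m d V (can_dual m d V)) F"
    and F: "F \<noteq> bot"
    and lim_V: "((\<lambda>t. dP m V (Vt t)) \<longlongrightarrow> 0) F"
    and lim_W: "((\<lambda>t. dP m (can_dual m d V) (can_dual m d (Vt t))) \<longlongrightarrow> 0) F"
  shows "\<not> local_min_FP v m k d V (can_dual m d V)"
proof
  assume "local_min_FP v m k d V (can_dual m d V)"
  then obtain \<epsilon> where \<epsilon>: "\<epsilon> > 0" and min: "\<And>V' W'. (V', W') \<in> DRS v m k d \<Longrightarrow>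
      dP m V V' + dP m (can_dual m d V) W' < \<epsilon> \<Longrightarrow> FP m d V (can_dual m d V) \<le> FP m d V' W'"
    unfolding local_min_FP_def by blast
  have "eventually (\<lambda>t. dP m V (Vt t) < \<epsilon> / 2) F"
    using order_tendstoD(2)[OF lim_V, of "\<epsilon> / 2"] \<epsilon> by simp
  moreover have "eventually (\<lambda>t. dP m (can_dual m d V) (can_dual m d (Vt t)) < \<epsilon> / 2) F"
    using order_tendstoD(2)[OF lim_W, of "\<epsilon> / 2"] \<epsilon> by simp
  ultimately obtain t where "Vt t \<in> Pv v m k d" "FP m d (Vt t) (can_dual m d (Vt t)) < FP m d V (can_dual m d V)"
    "dP m V (Vt t) + dP m (can_dual m d V) (can_dual m d (Vt t)) < \<epsilon>"
    using eventually_happens'[OF F eventually_conj[OF curve eventually_conj]] by fastforce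
  thus False using min[OF can_dual_DRS] by fastforce
qed

lemma rotate_component_deriv:
  assumes sys: "is_system m k d V" and j: "j < m" and U: "mat_deriv U Y 0 d d" and i: "i < m"
  shows "\<exists>D. mat_deriv (\<lambda>t. (V(j := V j * U t)) i) D 0 (k i) d"
proof (cases "i = j")
  case True
  have "V j \<in> carrier_mat (k j) d" using sys j unfolding is_system_def by auto
  from mat_deriv_mult[OF mat_deriv_const[OF this] U] show ?thesis using True by auto
next
  case False
  have "V i \<in> carrier_mat (k i) d" using sys i unfolding is_system_def by auto
  from mat_deriv_const[OF this] show ?thesis using False by auto
qed

lemma rotate_tendsto_system:
  assumes sys: "is_system m k d V" and j: "j < m" and U: "mat_deriv U Y 0 d d" and U0: "U 0 = 1\<^sub>m d"
  shows "((\<lambda>t. dP m V (V(j := V j * U t))) \<longlongrightarrow> 0) (at 0)"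
proof (rule tendsto_dP0)
  have Vc: "\<And>i. i < m \<Longrightarrow> V i \<in> carrier_mat (k i) d" using sys unfolding is_system_def by auto
  show "\<And>i. i < m \<Longrightarrow> V i \<in> carrier_mat (k i) d" by (rule Vc)
  show "\<And>i t. i < m \<Longrightarrow> (V(j := V j * U t)) i \<in> carrier_mat (k i) d"
    using Vc mult_carrier_mat[OF Vc[OF j] mat_derivD(1)[OF U]] by auto
  fix i a b assume iab: "i < m" "a < k i" "b < d"
  obtain D where D: "mat_deriv (\<lambda>t. (V(j := V j * U t)) i) D 0 (k i) d"
    using rotate_component_deriv[OF sys j U iab(1)] by auto
  show "((\<lambda>t. (V(j := V j * U t)) i $$ (a, b)) \<longlongrightarrow> V i $$ (a, b)) (at 0)"
    using mat_deriv_tendsto[OF D iab(2,3)] U0 Vc[OF j] by simp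
qed

lemma rotate_tendsto_dual:
  assumes V: "V \<in> Pv v m k d" and j: "j < m" and U: "mat_deriv U Y 0 d d" and U0: "U 0 = 1\<^sub>m d"
  shows "((\<lambda>t. dP m (can_dual m d V) (can_dual m d (V(j := V j * U t)))) \<longlongrightarrow> 0) (at 0)"
proof -
  define Vt where "Vt t = V(j := V j * U t)" for t
  define Wt where "Wt t = (\<lambda>i. Vt t i * inv_cof (RS_op m d (Vt t)))" for t
  have sys: "is_system m k d V" using Pv_system[OF V] .
  have Vc: "\<And>i. i < m \<Longrightarrow> V i \<in> carrier_mat (k i) d" using sys unfolding is_system_def by auto
  have Vt0: "Vt 0 = V" unfolding Vt_def U0 using Vc[OF j] by simp
  note mS = RS_op_rotate_deriv[OF sys j U U0, folded Vt_def]
  have dS: "Determinant.det (RS_op m d (Vt 0)) \<noteq> 0" unfolding Vt0 using Pv_det[OF V] .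
  have "((\<lambda>t. dP m (can_dual m d V) (Wt t)) \<longlongrightarrow> 0) (at 0)"
  proof (rule tendsto_dP0)
    show "\<And>i. i < m \<Longrightarrow> can_dual m d V i \<in> carrier_mat (k i) d"
      unfolding can_dual_eq[OF Pv_det[OF V]] using Vc by (meson RS_op_carrier inv_cof_carrier mult_carrier_mat)
    show "\<And>i t. i < m \<Longrightarrow> Wt t i \<in> carrier_mat (k i) d"
      unfolding Wt_def Vt_def using Vc mult_carrier_mat[OF Vc[OF j] mat_derivD(1)[OF U]]
      by (metis (no_types) RS_op_carrier fun_upd_apply inv_cof_carrier mult_carrier_mat)
    fix i a b assume iab: "i < m" "a < k i" "b < d"
    obtain D where "mat_deriv (\<lambda>t. Vt t i) D 0 (k i) d"
      using rotate_component_deriv[OF sys j U iab(1)] unfolding Vt_def by auto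
    from mat_deriv_tendsto[OF mat_deriv_mult[OF this mat_deriv_inv_cof[OF mS dS]] iab(2,3)]
    show "((\<lambda>t. Wt t i $$ (a, b)) \<longlongrightarrow> can_dual m d V i $$ (a, b)) (at 0)"
      unfolding Wt_def Vt0 can_dual_eq[OF Pv_det[OF V]] .
  qed
  moreover have "eventually (\<lambda>t. dP m (can_dual m d V) (Wt t) = dP m (can_dual m d V) (can_dual m d (Vt t))) (at 0)"
    using eventually_at_of_near[OF det_nonzero_near[OF mS dS]] by eventually_elim (simp add: Wt_def can_dual_eq)
  ultimately show ?thesis unfolding Vt_def by (rule Lim_transform_eventually)
qed

lemma descent_along_cayley:
  assumes V: "V \<in> Pv v m k d" and j: "j < m" and Kc: "K \<in> carrier_mat d d" and sk: "adj K = - K"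
    and G: "G = RS_op m d V - inv_cof (RS_op m d V) * inv_cof (RS_op m d V) * inv_cof (RS_op m d V)"
    and P: "P = adj (V j) * V j"
    and neg: "2 * Re (mtrace (G * (P * (K + K) + adj (K + K) * P))) < 0"
  shows "\<not> local_min_FP v m k d V (can_dual m d V)"
proof -
  define U where "U = cayley d K"
  define Vt where "Vt t = V(j := V j * U t)" for t
  define g where "g t = Re (mtrace (RS_op m d (Vt t) * RS_op m d (Vt t)))
      + Re (mtrace (inv_cof (RS_op m d (Vt t)) * inv_cof (RS_op m d (Vt t))))" for t
  have sys: "is_system m k d V" using Pv_system[OF V] .
  note cay = cayley_curve[OF Kc sk, folded U_def]
  have Uc: "\<And>t. U t \<in> carrier_mat d d" unfolding U_def using Kc by simp
  have Vj: "V j \<in> carrier_mat (k j) d" using sys j unfolding is_system_def by auto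
  have Vt0: "Vt 0 = V" unfolding Vt_def cay(1) using Vj by simp
  have mS: "mat_deriv (\<lambda>t. RS_op m d (Vt t)) (P * (K + K) + adj (K + K) * P) 0 d d"
    unfolding Vt_def P using RS_op_rotate_deriv[OF sys j cay(2,1)] .
  have dS: "Determinant.det (RS_op m d (Vt 0)) \<noteq> 0" unfolding Vt0 using Pv_det[OF V] .
  have "(g has_real_derivative 2 * Re (mtrace (G * (P * (K + K) + adj (K + K) * P)))) (at 0)"
    using potential_derivative[OF mS dS] unfolding g_def[abs_def] Vt0 G[symmetric] .
  then obtain \<delta> where \<delta>: "\<delta> > 0" "\<And>h. h > 0 \<Longrightarrow> h < \<delta> \<Longrightarrow> g (0 + h) < g 0"
    using DERIV_neg_dec_right neg by blast
  have "eventually (\<lambda>t. g t < g 0) (at_right 0)"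
    unfolding eventually_at_right_field using \<delta> by (intro exI[of _ \<delta>]) auto
  moreover have "eventually (\<lambda>t. Determinant.det (RS_op m d (Vt t)) \<noteq> 0) (at_right 0)"
    by (rule eventually_at_of_near[OF det_nonzero_near[OF mS dS]])
  moreover have "eventually (\<lambda>t. U t * adj (U t) = 1\<^sub>m d) (at_right 0)"
    by (rule eventually_at_of_near[OF cay(3)])
  ultimately have curve: "eventually (\<lambda>t. Vt t \<in> Pv v m k d \<and>
      FP m d (Vt t) (can_dual m d (Vt t)) < FP m d V (can_dual m d V)) (at_right 0)"
  proof eventually_elim
    case (elim t)
    have Vt: "Vt t \<in> Pv v m k d" using rotate_in_Pv[OF V j Uc elim(3)] elim(2) unfolding Vt_def by simp
    moreover have "FP m d (Vt t) (can_dual m d (Vt t)) = g t" "FP m d V (can_dual m d V) = g 0"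
      using FP_can_dual[OF V] FP_can_dual[OF Vt] unfolding g_def Vt0 by auto
    ultimately show ?case using elim(1) by simp
  qed
  show ?thesis
  proof (rule not_local_min_by_curve[OF curve])
    show "at_right (0::real) \<noteq> bot" by simp
    show "((\<lambda>t. dP m V (Vt t)) \<longlongrightarrow> 0) (at_right 0)"
      using rotate_tendsto_system[OF sys j cay(2,1)] unfolding Vt_def by (rule tendsto_within_subset) simp
    show "((\<lambda>t. dP m (can_dual m d V) (can_dual m d (Vt t))) \<longlongrightarrow> 0) (at_right 0)"
      using rotate_tendsto_dual[OF V j cay(2,1)] unfolding Vt_def by (rule tendsto_within_subset) simp
  qed
qed

lemma commutator_skew:
  assumes G: "G \<in> carrier_mat d d" and P: "P \<in> carrier_mat d d" and hG: "adj G = G" and hP: "adj P = P"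
  shows "adj (G * P - P * G) = - (G * P - P * G)"
proof -
  have "adj (G * P - P * G) = P * G - G * P" using G P hG hP by (simp add: adj_minus[of _ d d] adj_mult[of _ d d _ d])
  also have "\<dots> = - (G * P - P * G)" using G P by (intro eq_matI) auto
  finally show ?thesis .
qed

lemma commutator_nonzero:
  fixes G P :: "complex mat"
  assumes G: "G \<in> carrier_mat d d" and P: "P \<in> carrier_mat d d" and noncomm: "G * P \<noteq> P * G"
  shows "G * P - P * G \<noteq> 0\<^sub>m d d"
proof
  assume z: "G * P - P * G = 0\<^sub>m d d"
  have "G * P = P * G"
  proof (rule eq_matI)
    fix a b assume "a < dim_row (P * G)" "b < dim_col (P * G)"
    hence ab: "a < d" "b < d" using P G by auto
    have "(G * P - P * G) $$ (a,b) = 0" using z ab by simp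
    thus "(G * P) $$ (a,b) = (P * G) $$ (a,b)" using ab P G by simp
  qed (use P G in auto)
  thus False using noncomm by simp
qed

(* For the commutator direction K = [G, P] the first variation is
   2 tr(G [P, 2K]) = 2 tr(K (2K)) = -4 tr(K^* K). *)
lemma commutator_first_variation:
  assumes G: "G \<in> carrier_mat d d" and P: "P \<in> carrier_mat d d"
    and K: "K = G * P - P * G" and sk: "adj K = - K"
  shows "2 * Re (mtrace (G * (P * (K + K) + adj (K + K) * P))) = - 4 * Re (mtrace (adj K * K))"
proof -
  have Kc: "K \<in> carrier_mat d d" unfolding K using G P by (auto intro!: minus_carrier_mat)
  have "adj (K + K) = - (K + K)" using sk Kc by (simp add: adj_add[of _ d d]) (intro eq_matI, auto)
  hence "P * (K + K) + adj (K + K) * P = P * (K + K) - (K + K) * P" using P Kc by (intro eq_matI) auto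
  hence "mtrace (G * (P * (K + K) + adj (K + K) * P)) = mtrace (K * (K + K))"
    using commutator_trace[OF G P, of "K + K"] Kc unfolding K[symmetric] by simp
  also have "\<dots> = - 2 * mtrace (adj K * K)"
    unfolding sk using Kc by (simp add: mult_add_distrib_mat[of K d d] mtrace_add[of _ d] mtrace_uminus[of _ d])
  finally show ?thesis by simp
qed

lemma descent:
  assumes V: "V \<in> Pv v m k d" and j: "j < m"
    and G: "G = RS_op m d V - inv_cof (RS_op m d V) * inv_cof (RS_op m d V) * inv_cof (RS_op m d V)"
    and P: "P = adj (V j) * V j"
    and noncomm: "G * P \<noteq> P * G"
  shows "\<not> local_min_FP v m k d V (can_dual m d V)"
proof -
  have sys: "is_system m k d V" using Pv_system[OF V] .
  have Vj: "V j \<in> carrier_mat (k j) d" using sys j unfolding is_system_def by auto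
  have Pc: "P \<in> carrier_mat d d" unfolding P using Vj by auto
  have hP: "adj P = P" unfolding P using adj_mult[OF adj_carrier[OF Vj] Vj] by simp
  have Tc: "inv_cof (RS_op m d V) \<in> carrier_mat d d" using inv_cof_carrier[OF RS_op_carrier] .
  have Gc: "G \<in> carrier_mat d d" unfolding G
    by (rule minus_carrier_mat, rule mult_carrier_mat[OF mult_carrier_mat[OF Tc Tc] Tc])
  have hG: "adj G = G" unfolding G
    by (rule herm_diff_cube[OF RS_op_carrier Tc RS_op_herm[OF sys] RS_op_inv_herm[OF V]])
  define K where "K = G * P - P * G"
  have Kc: "K \<in> carrier_mat d d" unfolding K_def using Gc Pc by (auto intro!: minus_carrier_mat)
  have sk: "adj K = - K" unfolding K_def by (rule commutator_skew[OF Gc Pc hG hP])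
  have "2 * Re (mtrace (G * (P * (K + K) + adj (K + K) * P))) = - 4 * Re (mtrace (adj K * K))"
    by (rule commutator_first_variation[OF Gc Pc K_def sk])
  also have "\<dots> < 0" using mtrace_adj_self_pos[OF Kc commutator_nonzero[OF Gc Pc noncomm, folded K_def]] by simp
  finally show ?thesis by (rule descent_along_cayley[OF V j Kc sk G P])
qed

section \<open>Stationary positive operators are scalar\<close>

(* x^4 - c x^3 - 1 has a positive root: it is -1 at 0 and nonnegative at |c| + 2. *)
lemma quartic_root: fixes c :: real shows "\<exists>r>0. r^4 - c * r^3 - 1 = 0"
proof -
  define R where "R = \<bar>c\<bar> + 2"
  have R: "R \<ge> 2" "R - c \<ge> 2" unfolding R_def by auto
  have "R^3 \<ge> 1" using R(1) by (simp add: one_le_power)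
  hence "R^3 * (R - c) \<ge> 1 * 2" using R by (intro mult_mono) auto
  hence fR: "R^4 - c * R^3 - 1 \<ge> 0" by (simp add: algebra_simps power_numeral_reduce)
  have "\<exists>x. 0 \<le> x \<and> x \<le> R \<and> x^4 - c * x^3 - 1 = 0"
    by (rule IVT[of "\<lambda>x. x^4 - c * x^3 - 1"]) (use fR R in \<open>auto intro!: continuous_intros\<close>)
  then obtain x where x: "0 \<le> x" "x^4 - c * x^3 - 1 = 0" by auto
  have "x \<noteq> 0" using x by auto
  thus ?thesis using x by (intro exI[of _ x]) auto
qed

(* S T = I and S - T^3 = c I give S^4 = c S^3 + I (multiply by S^3). *)
lemma stationary_quartic:
  assumes S: "S \<in> carrier_mat d d" and T: "T \<in> carrier_mat d d" and ST: "S * T = 1\<^sub>m d"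
    and G: "S - T * T * T = complex_of_real c \<cdot>\<^sub>m 1\<^sub>m d"
  shows "S * S * S * S = complex_of_real c \<cdot>\<^sub>m (S * S * S) + 1\<^sub>m d"
proof -
  define S3 where "S3 = S * S * S"
  have S3c: "S3 \<in> carrier_mat d d" and T3c: "T * T * T \<in> carrier_mat d d" unfolding S3_def using S T by auto
  have "S3 * (T * T * T) = S * S * (S * T) * T * T"
    unfolding S3_def using S T by (simp add: assoc_mult_mat[of _ d d _ d _ d])
  also have "\<dots> = 1\<^sub>m d" using ST S T by (simp add: assoc_mult_mat[of _ d d _ d _ d])
  finally have S3T3: "S3 * (T * T * T) = 1\<^sub>m d" .
  have "S3 * S - 1\<^sub>m d = S3 * (S - T * T * T)"
    unfolding S3T3[symmetric] by (rule mult_minus_distrib_mat[symmetric, OF S3c S T3c])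
  also have "\<dots> = complex_of_real c \<cdot>\<^sub>m S3"
    unfolding G using mult_smult_distrib[OF S3c, of "1\<^sub>m d" d] S3c by simp
  finally have eq: "S3 * S - 1\<^sub>m d = complex_of_real c \<cdot>\<^sub>m S3" .
  show ?thesis unfolding S3_def[symmetric]
  proof (rule eq_matI)
    fix a b assume "a < dim_row (complex_of_real c \<cdot>\<^sub>m S3 + 1\<^sub>m d)" "b < dim_col (complex_of_real c \<cdot>\<^sub>m S3 + 1\<^sub>m d)"
    hence ab: "a < d" "b < d" using S3c by auto
    have "(S3 * S - 1\<^sub>m d) $$ (a,b) = (complex_of_real c \<cdot>\<^sub>m S3) $$ (a,b)" using eq by simp
    thus "(S3 * S) $$ (a,b) = (complex_of_real c \<cdot>\<^sub>m S3 + 1\<^sub>m d) $$ (a,b)" using ab S3c S by (auto simp: diff_eq_eq)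
  qed (use S3c S in auto)
qed

(* If r > 0 is a root of x^4 - c x^3 - 1 and b = r^-3, then x^4 - c x^3 - 1 factors as
   (x^3 + b x^2 + b r x + b r^2)(x - r); the same identity holds for any S with S^4 = c S^3 + I. *)
lemma quartic_factor:
  assumes S: "S \<in> carrier_mat d d" and quartic: "S * S * S * S = complex_of_real c \<cdot>\<^sub>m (S * S * S) + 1\<^sub>m d"
    and r: "r > 0" "r^4 - c * r^3 - 1 = 0" and b: "b = 1 / r^3"
  shows "(S * S * S + complex_of_real b \<cdot>\<^sub>m (S * S) + complex_of_real (b * r) \<cdot>\<^sub>m S
      + complex_of_real (b * r * r) \<cdot>\<^sub>m 1\<^sub>m d) * (S - complex_of_real r \<cdot>\<^sub>m 1\<^sub>m d) = 0\<^sub>m d d"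
proof -
  define S2 where "S2 = S * S"
  define S3 where "S3 = S2 * S"
  define S4 where "S4 = S3 * S"
  have S2c: "S2 \<in> carrier_mat d d" and S3c: "S3 \<in> carrier_mat d d" and S4c: "S4 \<in> carrier_mat d d"
    unfolding S2_def S3_def S4_def using S by auto
  have S4e: "S4 $$ (a,b) = complex_of_real c * S3 $$ (a,b) + (if a = b then 1 else 0)" if "a < d" "b < d" for a b
  proof -
    have "S4 $$ (a,b) = (complex_of_real c \<cdot>\<^sub>m S3 + 1\<^sub>m d) $$ (a,b)"
      using quartic unfolding S4_def S3_def S2_def by simp
    thus ?thesis using that S3c by simp
  qed
  have br3: "b * r^3 = 1" unfolding b using r(1) by simp
  have "r^4 - c * r^3 - 1 = r^3 * (r - c - b)" unfolding b using r(1) by (simp add: field_simps power_numeral_reduce)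
  hence bmr: "b - r = - c" using r by simp
  define cb where "cb = complex_of_real b"
  define cr where "cr = complex_of_real r"
  define Q where "Q = S3 + cb \<cdot>\<^sub>m S2 + (cb * cr) \<cdot>\<^sub>m S + (cb * cr * cr) \<cdot>\<^sub>m 1\<^sub>m d"
  have Qc: "Q \<in> carrier_mat d d" unfolding Q_def using S S2c S3c by auto
  have QS: "Q * S = S4 + cb \<cdot>\<^sub>m S3 + (cb * cr) \<cdot>\<^sub>m S2 + (cb * cr * cr) \<cdot>\<^sub>m S"
    unfolding Q_def S4_def S3_def S2_def using S
    by (simp add: add_mult_distrib_mat[of _ d d _ S d] mult_smult_assoc_mat[of _ d d S d])
  have "Q * (S - cr \<cdot>\<^sub>m 1\<^sub>m d) = Q * S - Q * (cr \<cdot>\<^sub>m 1\<^sub>m d)" by (rule mult_minus_distrib_mat[OF Qc S]) simp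
  also have "Q * (cr \<cdot>\<^sub>m 1\<^sub>m d) = cr \<cdot>\<^sub>m Q" using mult_smult_distrib[OF Qc, of "1\<^sub>m d" d] Qc by simp
  finally have QZ: "Q * (S - cr \<cdot>\<^sub>m 1\<^sub>m d) = Q * S - cr \<cdot>\<^sub>m Q" .
  have "Q * (S - cr \<cdot>\<^sub>m 1\<^sub>m d) = 0\<^sub>m d d"
  proof (rule eq_matI)
    fix i j assume "i < dim_row (0\<^sub>m d d :: complex mat)" "j < dim_col (0\<^sub>m d d :: complex mat)"
    hence ij: "i < d" "j < d" by auto
    have "(Q * (S - cr \<cdot>\<^sub>m 1\<^sub>m d)) $$ (i,j) = S4 $$ (i,j) + cb * S3 $$ (i,j) + cb * cr * S2 $$ (i,j)
        + cb * cr * cr * S $$ (i,j)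
        - cr * (S3 $$ (i,j) + cb * S2 $$ (i,j) + cb * cr * S $$ (i,j) + cb * cr * cr * (if i = j then 1 else 0))"
      unfolding QZ QS unfolding Q_def using ij S S2c S3c S4c by simp
    also have "\<dots> = (complex_of_real c + cb - cr) * S3 $$ (i,j) + (1 - cb * cr * cr * cr) * (if i = j then 1 else 0)"
      unfolding S4e[OF ij] by (simp add: algebra_simps)
    also have "complex_of_real c + cb - cr = 0" unfolding cb_def cr_def using bmr
      by (metis add.commute add_uminus_conv_diff diff_add_cancel diff_self of_real_add of_real_minus)
    also have "1 - cb * cr * cr * cr = 0" unfolding cb_def cr_def using br3
      by (metis diff_self of_real_1 of_real_mult power3_eq_cube mult.assoc)
    finally show "(Q * (S - cr \<cdot>\<^sub>m 1\<^sub>m d)) $$ (i,j) = 0\<^sub>m d d $$ (i,j)" using ij by simp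
  qed (use Qc in auto)
  thus ?thesis unfolding Q_def S3_def S2_def cb_def cr_def of_real_mult .
qed

lemma mtrace_sandwich_add: assumes "Z \<in> carrier_mat n n" "A \<in> carrier_mat n n" "B \<in> carrier_mat n n"
  shows "mtrace (Z * (A + B) * Z) = mtrace (Z * A * Z) + mtrace (Z * B * Z)"
proof -
  have "Z * (A + B) * Z = Z * A * Z + Z * B * Z" using assms
    by (simp add: mult_add_distrib_mat[of Z n n] add_mult_distrib_mat[of _ n n])
  thus ?thesis using assms by (simp add: mtrace_add[of _ n])
qed

lemma mtrace_sandwich_smult: assumes "Z \<in> carrier_mat n n" "A \<in> carrier_mat n n"
  shows "mtrace (Z * (a \<cdot>\<^sub>m A) * Z) = a * mtrace (Z * A * Z)"
proof -
  have "Z * (a \<cdot>\<^sub>m A) * Z = a \<cdot>\<^sub>m (Z * A * Z)" using assms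
    by (simp add: mult_smult_distrib[of Z n n] mult_smult_assoc_mat[of _ n n])
  thus ?thesis using assms by (simp add: mtrace_smult[of _ n])
qed

(* For Hermitian Z and positive semidefinite Hermitian S the sandwiches Z S^n Z, n <= 3, have
   nonnegative trace: Z S^2 Z = (SZ)^* (SZ) and Z S^3 Z = (SZ)^* S (SZ). *)
lemma sandwich_powers_nonneg:
  assumes S: "S \<in> carrier_mat d d" and Z: "Z \<in> carrier_mat d d" and hS: "adj S = S" and hZ: "adj Z = Z"
    and psd: "\<And>B. B \<in> carrier_mat d d \<Longrightarrow> Re (mtrace (adj B * S * B)) \<ge> 0"
  shows "Re (mtrace (Z * (S * S * S) * Z)) \<ge> 0" "Re (mtrace (Z * (S * S) * Z)) \<ge> 0"
    "Re (mtrace (Z * S * Z)) \<ge> 0" "Re (mtrace (Z * 1\<^sub>m d * Z)) \<ge> 0"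
proof -
  have SZ: "S * Z \<in> carrier_mat d d" using S Z by auto
  have aSZ: "adj (S * Z) = Z * S" using adj_mult[OF S Z] hS hZ by simp
  have "Z * (S * S * S) * Z = adj (S * Z) * S * (S * Z)" unfolding aSZ using Z S
    by (simp add: assoc_mult_mat[of _ d d _ d _ d])
  thus "Re (mtrace (Z * (S * S * S) * Z)) \<ge> 0" using psd[OF SZ] by simp
  have "Z * (S * S) * Z = adj (S * Z) * (S * Z)" unfolding aSZ using Z S
    by (simp add: assoc_mult_mat[of _ d d _ d _ d])
  thus "Re (mtrace (Z * (S * S) * Z)) \<ge> 0" using mtrace_adj_self_nonneg[OF SZ] by simp
  show "Re (mtrace (Z * S * Z)) \<ge> 0" using psd[OF Z] hZ by simp
  show "Re (mtrace (Z * 1\<^sub>m d * Z)) \<ge> 0" using mtrace_adj_self_nonneg[OF Z] hZ Z by simp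
qed

(* With
   Z = S - rI and Q the cubic factor, 0 = tr(Z Q Z) = tr(Z S^3 Z) + b tr(Z S^2 Z) + b r tr(Z S Z)
   + b r^2 tr(Z^2), a sum of nonnegative terms, so tr(Z^* Z) = 0. *)
lemma scalar_of_quartic:
  assumes S: "S \<in> carrier_mat d d" and hS: "adj S = S"
    and psd: "\<And>B. B \<in> carrier_mat d d \<Longrightarrow> Re (mtrace (adj B * S * B)) \<ge> 0"
    and quartic: "S * S * S * S = complex_of_real c \<cdot>\<^sub>m (S * S * S) + 1\<^sub>m d"
  shows "\<exists>r>0. S = complex_of_real r \<cdot>\<^sub>m 1\<^sub>m d"
proof -
  obtain r where r: "r > 0" "r^4 - c * r^3 - 1 = 0" using quartic_root[of c] by auto
  define b where "b = 1 / r^3"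
  have bpos: "b > 0" unfolding b_def using r(1) by simp
  define S2 where "S2 = S * S"
  define S3 where "S3 = S * S * S"
  define Z where "Z = S - complex_of_real r \<cdot>\<^sub>m 1\<^sub>m d"
  have S2c: "S2 \<in> carrier_mat d d" and S3c: "S3 \<in> carrier_mat d d" and Zc: "Z \<in> carrier_mat d d"
    unfolding S2_def S3_def Z_def using S by auto
  have hZ: "adj Z = Z" unfolding Z_def using S hS by (simp add: adj_minus[of _ d d] adj_smult)
  define Q where "Q = S3 + complex_of_real b \<cdot>\<^sub>m S2 + complex_of_real (b * r) \<cdot>\<^sub>m S
      + complex_of_real (b * r * r) \<cdot>\<^sub>m 1\<^sub>m d"
  have Qc: "Q \<in> carrier_mat d d" unfolding Q_def using S S2c S3c by auto
  have QZ0: "Q * Z = 0\<^sub>m d d"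
    unfolding Q_def S3_def S2_def Z_def by (rule quartic_factor[OF S quartic r b_def])
  have "Z * Q * Z = Z * (Q * Z)" using Zc Qc by (simp add: assoc_mult_mat[of _ d d _ d _ d])
  hence "mtrace (Z * Q * Z) = 0" unfolding QZ0 using Zc unfolding mtrace_def by auto
  moreover have "mtrace (Z * Q * Z) = mtrace (Z * S3 * Z) + complex_of_real b * mtrace (Z * S2 * Z)
      + complex_of_real (b * r) * mtrace (Z * S * Z) + complex_of_real (b * r * r) * mtrace (Z * 1\<^sub>m d * Z)"
    unfolding Q_def using Zc S S2c S3c by (simp add: mtrace_sandwich_add[of _ d] mtrace_sandwich_smult[of _ d])
  ultimately have "Re (mtrace (Z * S3 * Z) + complex_of_real b * mtrace (Z * S2 * Z)
      + complex_of_real (b * r) * mtrace (Z * S * Z) + complex_of_real (b * r * r) * mtrace (Z * 1\<^sub>m d * Z)) = 0"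
    by simp
  hence tr0: "0 = Re (mtrace (Z * S3 * Z)) + b * Re (mtrace (Z * S2 * Z))
      + (b * r) * Re (mtrace (Z * S * Z)) + (b * r * r) * Re (mtrace (Z * 1\<^sub>m d * Z))"
    by simp
  note t = sandwich_powers_nonneg[OF S Zc hS hZ psd, folded S3_def S2_def]
  have ZZ: "Z * 1\<^sub>m d * Z = adj Z * Z" using hZ Zc by simp
  have "(b * r * r) * Re (mtrace (adj Z * Z)) \<le> 0"
    using tr0 t(1) mult_nonneg_nonneg[OF less_imp_le[OF bpos] t(2)]
      mult_nonneg_nonneg[OF mult_nonneg_nonneg[OF less_imp_le[OF bpos] less_imp_le[OF r(1)]] t(3)]
    unfolding ZZ by linarith
  hence "Re (mtrace (adj Z * Z)) \<le> 0" using bpos r(1) by (simp add: mult_le_0_iff)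
  hence Z0: "Z = 0\<^sub>m d d" by (rule mtrace_adj_self_le_0[OF Zc])
  have "S = complex_of_real r \<cdot>\<^sub>m 1\<^sub>m d"
  proof (rule eq_matI)
    fix i j assume "i < dim_row (complex_of_real r \<cdot>\<^sub>m 1\<^sub>m d)" "j < dim_col (complex_of_real r \<cdot>\<^sub>m 1\<^sub>m d)"
    hence ij: "i < d" "j < d" by auto
    have "Z $$ (i,j) = 0" using Z0 ij by simp
    thus "S $$ (i,j) = (complex_of_real r \<cdot>\<^sub>m 1\<^sub>m d) $$ (i,j)" unfolding Z_def using ij S by simp
  qed (use S in auto)
  thus ?thesis using r(1) by blast
qed

lemma tau_pos:
  fixes v :: "nat \<Rightarrow> real" and k :: "nat \<Rightarrow> nat"
  assumes "m \<ge> 1" "\<forall>i<m. 1 \<le> k i" "\<forall>i<m. v i > 0"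
  shows "(\<Sum>i<m. (v i)\<^sup>2 * real (k i)) > 0"
proof -
  have "v 0 > 0" "k 0 \<ge> 1" using assms by auto
  hence "0 < (v 0)\<^sup>2 * real (k 0)" by simp
  also have "\<dots> \<le> (\<Sum>i<m. (v i)\<^sup>2 * real (k i))" using assms(1) by (intro member_le_sum) auto
  finally show ?thesis .
qed

lemma irreducible_herm_scalar:
  assumes irr: "irreducible_sys m d V" and d: "d \<ge> 1"
    and G: "G \<in> carrier_mat d d" and hG: "adj G = G"
    and comm: "\<And>i. i < m \<Longrightarrow> G * (adj (V i) * V i) = (adj (V i) * V i) * G"
  shows "\<exists>c. G = complex_of_real c \<cdot>\<^sub>m 1\<^sub>m d"
proof -
  have "G \<in> {A \<in> carrier_mat d d. \<forall>i<m. A * (adj (V i) * V i) = (adj (V i) * V i) * A}" using G comm by auto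
  then obtain c where c: "G = c \<cdot>\<^sub>m 1\<^sub>m d" using irr unfolding irreducible_sys_def by auto
  have "(cnj c \<cdot>\<^sub>m 1\<^sub>m d) $$ (0,0) = (c \<cdot>\<^sub>m 1\<^sub>m d) $$ (0,0)" using hG unfolding c by (simp add: adj_smult)
  hence "cnj c = c" using d by simp
  hence "c = complex_of_real (Re c)" by (metis Reals_cnj_iff complex_is_Real_iff of_real_Re)
  with c show ?thesis by (intro exI[of _ "Re c"]) metis
qed

(* Local => tight: descent puts G = S - S^-3 into the commutant, irreducibility makes it a real
   scalar, the quartic argument makes S scalar, and the trace fixes the scalar. *)
lemma local_min_imp_tight:
  assumes V: "V \<in> Pv v m k d" and irr: "irreducible_sys m d V" and d: "d \<ge> 1"
    and lm: "local_min_FP v m k d V (can_dual m d V)"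
  shows "RS_op m d V = complex_of_real ((\<Sum>i<m. (v i)\<^sup>2 * real (k i)) / real d) \<cdot>\<^sub>m 1\<^sub>m d"
proof -
  define S where "S = RS_op m d V"
  define T where "T = inv_cof S"
  have Sc: "S \<in> carrier_mat d d" and Tc: "T \<in> carrier_mat d d" unfolding S_def T_def by auto
  have hS: "adj S = S" unfolding S_def using RS_op_herm[OF Pv_system[OF V]] .
  have hT: "adj T = T" unfolding T_def S_def using RS_op_inv_herm[OF V] .
  have Gc: "S - T * T * T \<in> carrier_mat d d" using Sc Tc by (intro minus_carrier_mat) auto
  have "(S - T * T * T) * (adj (V i) * V i) = (adj (V i) * V i) * (S - T * T * T)" if "i < m" for i
    using descent[where G = "S - T * T * T", OF V that _ refl] lm unfolding S_def T_def by blast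
  then obtain c where c: "S - T * T * T = complex_of_real c \<cdot>\<^sub>m 1\<^sub>m d"
    using irreducible_herm_scalar[OF irr d Gc herm_diff_cube[OF Sc Tc hS hT]] by blast
  have ST: "S * T = 1\<^sub>m d" unfolding T_def S_def using inv_cof(1)[OF RS_op_carrier Pv_det[OF V]] .
  have psd: "\<And>B. B \<in> carrier_mat d d \<Longrightarrow> Re (mtrace (adj B * S * B)) \<ge> 0"
    unfolding S_def by (rule RS_op_psd[OF Pv_system[OF V]])
  obtain r where r: "S = complex_of_real r \<cdot>\<^sub>m 1\<^sub>m d"
    using scalar_of_quartic[OF Sc hS psd stationary_quartic[OF Sc Tc ST c]] by blast
  have "mtrace S = complex_of_real r * of_nat d" unfolding r by (simp add: mtrace_smult[of _ d] mtrace_one)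
  hence "complex_of_real (\<Sum>i<m. (v i)\<^sup>2 * real (k i)) = complex_of_real (r * real d)"
    using trace_RS_op_Pv[OF V] unfolding S_def by simp
  hence "(\<Sum>i<m. (v i)\<^sup>2 * real (k i)) = r * real d" by (simp only: of_real_eq_iff)
  hence "r = (\<Sum>i<m. (v i)\<^sup>2 * real (k i)) / real d" using d by (simp add: field_simps)
  thus ?thesis using r unfolding S_def by simp
qed

theorem lemma6p4:
  fixes m d :: nat and k :: "nat \<Rightarrow> nat" and v :: "nat \<Rightarrow> real"
    and V :: "nat \<Rightarrow> complex mat"
  assumes "m \<ge> 1" and "d \<ge> 1"
    and "\<forall>i<m. 1 \<le> k i \<and> k i \<le> d"
    and "\<forall>i<m. v i > 0"
    and "V \<in> Pv v m k d"
    and "irreducible_sys m d V"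
  defines "\<tau> \<equiv> (\<Sum>i<m. (v i)\<^sup>2 * real (k i))"
  shows "(local_min_FP v m k d V (can_dual m d V) \<longleftrightarrow> global_min_FP v m k d V (can_dual m d V))
       \<and> (global_min_FP v m k d V (can_dual m d V) \<longleftrightarrow>
            RS_op m d V = complex_of_real (\<tau> / real d) \<cdot>\<^sub>m 1\<^sub>m d)"
proof -
  have tau: "\<tau> = (\<Sum>i<m. (v i)\<^sup>2 * real (k i))" "\<tau> > 0"
    unfolding \<tau>_def using tau_pos[of m k v] assms(1,3,4) by auto
  have global_local: "global_min_FP v m k d V (can_dual m d V) \<Longrightarrow> local_min_FP v m k d V (can_dual m d V)"
    unfolding global_min_FP_def local_min_FP_def by (intro conjI exI[of _ 1]) auto
  have local_tight: "local_min_FP v m k d V (can_dual m d V) \<Longrightarrow>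
      RS_op m d V = complex_of_real (\<tau> / real d) \<cdot>\<^sub>m 1\<^sub>m d"
    unfolding \<tau>_def by (rule local_min_imp_tight[OF assms(5,6,2)])
  have tight_global: "RS_op m d V = complex_of_real (\<tau> / real d) \<cdot>\<^sub>m 1\<^sub>m d \<Longrightarrow>
      global_min_FP v m k d V (can_dual m d V)"
    by (rule tight_imp_global[OF assms(5,2) tau])
  show ?thesis using global_local local_tight tight_global by blast
qed

end
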